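(* For $\mathbf m\in\Xi$ regarded as a finite $W$-orbit in $\mathcal C\times\mathcal C$, let $E_1(\mathbf m)=\mathrm{Fun}(\mathbf m)$ be the $\mathbf k$-vector space of functions $\mathbf m\to\mathbf k$; for $\mathbf m\ge'\mathbf n$ let $\partial'_{\mathbf m,\mathbf n}=(\pi_{\mathbf m,\mathbf n})_*$ (summation over fibers) and for $\mathbf m\ge''\mathbf n$ let $\partial''_{\mathbf m,\mathbf n}=\pi_{\mathbf m,\mathbf n}^*$ (pullback). Then $E_1=(E_1(\mathbf m),\partial',\partial'')$ is a mixed Bruhat sheaf of type $(W,S)$.
   Context: $\mathfrak h_\mathbb R$ finite-dimensional real Euclidean space, $W\subset O(\mathfrak h_\mathbb R)$ finite reflection group (here a Weyl group), $\mathcal C$ the faces of its hyperplane arrangement ordered by $A\le B$ iff $A\subset\overline B$; chamber $C^+$, $S$ reflections in its walls, $W_I=\langle I\rangle$, $C^+_I$ the face of $\overline{C^+}$ open in $\bigcap_{s\in I}H_s$, $\bigsqcup_IW/W_I\cong\mathcal C$. $\Xi=W\backslash(\mathcal C\times\mathcal C)=\bigsqcup\Xi(I,J)$, $\Xi(I,J)=W\backslash(W/W_I\times W/W_J)$, order induced by the product order; $\mathbf m\ge'\mathbf n$ ($\ge''$) if $\mathbf n$ is obtained from $\mathbf m$ by projecting cosets in the first (second) factor. For $\mathbf m\ge\mathbf n$, $\pi_{\mathbf m,\mathbf n}:\mathbf m\to\mathbf n$ is the surjective $W$-map induced by the coset projections. $\mathrm{Sup}(\mathbf m',\mathbf n)=\{\mathbf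 m:\mathbf m\ge''\mathbf m',\mathbf m\ge'\mathbf n\}$. $\mathfrak h=\mathfrak h_\mathbb R\oplus i\mathfrak h_\mathbb R$, $p:\mathfrak h\to W\backslash\mathfrak h$, $U_{\mathbf m}=p(iC+D)$ for $\mathbf m=W(C,D)$, $\mathcal S^{(0)}$ the stratification by images of generic parts of complexified flats; anodyne: cells in the same $\mathcal S^{(0)}$-stratum. $\mathbf k$ algebraically closed of characteristic $0$. Mixed Bruhat sheaf: spaces $E(\mathbf m)$ with maps $\partial'_{\mathbf m,\mathbf n}:E(\mathbf m)\to E(\mathbf n)$ ($\mathbf m\ge'\mathbf n$), $\partial''_{\mathbf m,\mathbf n}:E(\mathbf n)\to E(\mathbf m)$ ($\mathbf m\ge''\mathbf n$) satisfying (MBS1) functoriality of $\partial'$ and $\partial''$; (MBS2) for $\mathbf m'\ge'\mathbf n'$, $\mathbf n\ge''\mathbf n'$: $\partial''_{\mathbf n,\mathbf n'}\partial'_{\mathbf m',\mathbf n'}=\sum_{\mathbf m\in\mathrm{Sup}(\mathbf m',\mathbf n)}\partial'_{\mathbf m,\mathbf n}\partial''_{\mathbf m,\mathbf m'}$; (MBS3) anodyne $\partial'$, $\partial''$ are isomorphisms. *)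

theory Defs
  imports "HOL-Analysis.Analysis" "HOL-Computational_Algebra.Polynomial"
begin

definition refl_vec :: "'a::real_inner \<Rightarrow> 'a \<Rightarrow> 'a" where
  "refl_vec a v = v - (2 * (v \<bullet> a) / (a \<bullet> a)) *\<^sub>R a"

definition reflections :: "('a::real_inner \<Rightarrow> 'a) set \<Rightarrow> ('a \<Rightarrow> 'a) set" where
  "reflections W = {s \<in> W. \<exists>a. a \<noteq> 0 \<and> s = refl_vec a}"

definition roots :: "('a::real_inner \<Rightarrow> 'a) set \<Rightarrow> 'a set" where
  "roots W = {a. a \<noteq> 0 \<and> refl_vec a \<in> W}"

definition finite_reflection_group :: "('a::euclidean_space \<Rightarrow> 'a) set \<Rightarrow> bool" where
  "finite_reflection_group W \<longleftrightarrow>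
     finite W \<and> id \<in> W \<and> (\<forall>v\<in>W. \<forall>w\<in>W. v \<circ> w \<in> W) \<and>
     (\<forall>w\<in>W. orthogonal_transformation w) \<and>
     (\<forall>w\<in>W. \<exists>rs. set rs \<subseteq> reflections W \<and> w = foldr (\<circ>) rs id)"

definition int_span :: "'a::real_vector set \<Rightarrow> 'a set" where
  "int_span B = {v. \<exists>c. (\<forall>b\<in>B. c b \<in> \<int>) \<and> v = (\<Sum>b\<in>B. c b *\<^sub>R b)}"

text \<open>Weyl group = crystallographic: W stabilises a full lattice.\<close>
definition crystallographic :: "('a::euclidean_space \<Rightarrow> 'a) set \<Rightarrow> bool" where
  "crystallographic W \<longleftrightarrow>
     (\<exists>B. independent B \<and> span B = UNIV \<and> (\<forall>w\<in>W. \<forall>b\<in>B. w b \<in> int_span B))"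

definition arr_face :: "('a::real_inner \<Rightarrow> 'a) set \<Rightarrow> 'a \<Rightarrow> 'a set" where
  "arr_face W x = {y. \<forall>a\<in>roots W. sgn (a \<bullet> y) = sgn (a \<bullet> x)}"

definition arr_faces :: "('a::real_inner \<Rightarrow> 'a) set \<Rightarrow> 'a set set" where
  "arr_faces W = range (arr_face W)"

definition face_le :: "'a::topological_space set \<Rightarrow> 'a set \<Rightarrow> bool" where
  "face_le A B \<longleftrightarrow> A \<subseteq> closure B"

definition pair_orbit :: "('a \<Rightarrow> 'a) set \<Rightarrow> 'a set \<times> 'a set \<Rightarrow> ('a set \<times> 'a set) set" where
  "pair_orbit W p = {(w ` fst p, w ` snd p) | w. w \<in> W}"

definition Xi :: "('a::real_inner \<Rightarrow> 'a) set \<Rightarrow> ('a set \<times> 'a set) set set" where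
  "Xi W = pair_orbit W ` (arr_faces W \<times> arr_faces W)"

definition xi_ge1 :: "('a::real_inner \<Rightarrow> 'a) set \<Rightarrow> ('a set \<times> 'a set) set \<Rightarrow> ('a set \<times> 'a set) set \<Rightarrow> bool" where
  "xi_ge1 W m n \<longleftrightarrow> m \<in> Xi W \<and> n \<in> Xi W \<and>
     (\<exists>C D C'. (C, D) \<in> m \<and> (C', D) \<in> n \<and> face_le C' C)"

definition xi_ge2 :: "('a::real_inner \<Rightarrow> 'a) set \<Rightarrow> ('a set \<times> 'a set) set \<Rightarrow> ('a set \<times> 'a set) set \<Rightarrow> bool" where
  "xi_ge2 W m n \<longleftrightarrow> m \<in> Xi W \<and> n \<in> Xi W \<and>
     (\<exists>C D D'. (C, D) \<in> m \<and> (C, D') \<in> n \<and> face_le D' D)"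

definition proj :: "('a::topological_space set \<times> 'a set) set \<Rightarrow> ('a set \<times> 'a set) set \<Rightarrow> 'a set \<times> 'a set \<Rightarrow> 'a set \<times> 'a set" where
  "proj m n p = (THE q. q \<in> n \<and> face_le (fst q) (fst p) \<and> face_le (snd q) (snd p))"

definition Sup_xi :: "('a::real_inner \<Rightarrow> 'a) set \<Rightarrow> ('a set \<times> 'a set) set \<Rightarrow> ('a set \<times> 'a set) set \<Rightarrow> ('a set \<times> 'a set) set set" where
  "Sup_xi W m' n = {m. xi_ge2 W m m' \<and> xi_ge1 W m n}"

text \<open>A point x + i y of h = h_R + i h_R is represented by the pair (x, y);
  W acts diagonally, and p(z) is the W-orbit of z.\<close>
definition pt_orbit :: "('a \<Rightarrow> 'a) set \<Rightarrow> 'a \<times> 'a \<Rightarrow> ('a \<times> 'a) set" where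
  "pt_orbit W z = {(w (fst z), w (snd z)) | w. w \<in> W}"

definition flats :: "('a::real_inner \<Rightarrow> 'a) set \<Rightarrow> 'a set set" where
  "flats W = {(\<Inter>a\<in>A. {v. a \<bullet> v = 0}) | A. A \<subseteq> roots W}"

definition generic_part :: "('a::real_inner \<Rightarrow> 'a) set \<Rightarrow> 'a set \<Rightarrow> ('a \<times> 'a) set" where
  "generic_part W L = {z. fst z \<in> L \<and> snd z \<in> L \<and>
     (\<forall>a\<in>roots W. a \<bullet> fst z = 0 \<and> a \<bullet> snd z = 0 \<longrightarrow> (\<forall>v\<in>L. a \<bullet> v = 0))}"

definition stratum :: "('a::real_inner \<Rightarrow> 'a) set \<Rightarrow> 'a set \<Rightarrow> ('a \<times> 'a) set set" where
  "stratum W L = pt_orbit W ` generic_part W L"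

text \<open>U_m = p(iC + D) for m = W(C,D) (independent of the representative).\<close>
definition cell :: "('a \<Rightarrow> 'a) set \<Rightarrow> ('a set \<times> 'a set) set \<Rightarrow> ('a \<times> 'a) set set" where
  "cell W m = {pt_orbit W (d, c) | c d. \<exists>C D. (C, D) \<in> m \<and> c \<in> C \<and> d \<in> D}"

definition same_stratum :: "('a::real_inner \<Rightarrow> 'a) set \<Rightarrow> ('a set \<times> 'a set) set \<Rightarrow> ('a set \<times> 'a set) set \<Rightarrow> bool" where
  "same_stratum W m n \<longleftrightarrow>
     (\<exists>L\<in>flats W. cell W m \<subseteq> stratum W L \<and> cell W n \<subseteq> stratum W L)"

type_synonym 'a xi = "('a set \<times> 'a set) set"

text \<open>E m is a k-subspace of the function space 'p \<Rightarrow> 'k; d1 m n = \<partial>'_{m,n} : E m \<rightarrow> E n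
  (m \<ge>' n), d2 m n = \<partial>''_{m,n} : E n \<rightarrow> E m (m \<ge>'' n).\<close>
definition mixed_Bruhat_sheaf ::
  "('a::real_inner \<Rightarrow> 'a) set \<Rightarrow> ('a xi \<Rightarrow> ('p \<Rightarrow> 'k::field) set) \<Rightarrow>
   ('a xi \<Rightarrow> 'a xi \<Rightarrow> ('p \<Rightarrow> 'k) \<Rightarrow> ('p \<Rightarrow> 'k)) \<Rightarrow>
   ('a xi \<Rightarrow> 'a xi \<Rightarrow> ('p \<Rightarrow> 'k) \<Rightarrow> ('p \<Rightarrow> 'k)) \<Rightarrow> bool" where
  "mixed_Bruhat_sheaf W E d1 d2 \<longleftrightarrow>
     \<comment> \<open>each E m is a k-vector space\<close>
     (\<forall>m\<in>Xi W. (\<lambda>_. 0) \<in> E m \<and> (\<forall>f\<in>E m. \<forall>g\<in>E m. (\<lambda>x. f x + g x) \<in> E m) \<and>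
        (\<forall>c. \<forall>f\<in>E m. (\<lambda>x. c * f x) \<in> E m)) \<and>
     \<comment> \<open>the maps are k-linear maps between the right spaces\<close>
     (\<forall>m n. xi_ge1 W m n \<longrightarrow>
        (\<forall>f\<in>E m. d1 m n f \<in> E n) \<and>
        (\<forall>f\<in>E m. \<forall>g\<in>E m. d1 m n (\<lambda>x. f x + g x) = (\<lambda>x. d1 m n f x + d1 m n g x)) \<and>
        (\<forall>c. \<forall>f\<in>E m. d1 m n (\<lambda>x. c * f x) = (\<lambda>x. c * d1 m n f x))) \<and>
     (\<forall>m n. xi_ge2 W m n \<longrightarrow>
        (\<forall>f\<in>E n. d2 m n f \<in> E m) \<and>
        (\<forall>f\<in>E n. \<forall>g\<in>E n. d2 m n (\<lambda>x. f x + g x) = (\<lambda>x. d2 m n f x + d2 m n g x)) \<and>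
        (\<forall>c. \<forall>f\<in>E n. d2 m n (\<lambda>x. c * f x) = (\<lambda>x. c * d2 m n f x))) \<and>
     \<comment> \<open>(MBS1) functoriality\<close>
     (\<forall>m\<in>Xi W. \<forall>f\<in>E m. d1 m m f = f \<and> d2 m m f = f) \<and>
     (\<forall>m n q. xi_ge1 W m n \<and> xi_ge1 W n q \<longrightarrow> (\<forall>f\<in>E m. d1 n q (d1 m n f) = d1 m q f)) \<and>
     (\<forall>m n q. xi_ge2 W m n \<and> xi_ge2 W n q \<longrightarrow> (\<forall>f\<in>E q. d2 m n (d2 n q f) = d2 m q f)) \<and>
     \<comment> \<open>(MBS2)\<close>
     (\<forall>m' n' n. xi_ge1 W m' n' \<and> xi_ge2 W n n' \<longrightarrow>
        (\<forall>f\<in>E m'. d2 n n' (d1 m' n' f) = (\<lambda>x. \<Sum>m\<in>Sup_xi W m' n. d1 m n (d2 m m' f) x))) \<and>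
     \<comment> \<open>(MBS3) anodyne maps are isomorphisms\<close>
     (\<forall>m n. xi_ge1 W m n \<and> same_stratum W m n \<longrightarrow> bij_betw (d1 m n) (E m) (E n)) \<and>
     (\<forall>m n. xi_ge2 W m n \<and> same_stratum W m n \<longrightarrow> bij_betw (d2 m n) (E n) (E m))"

definition Fun_space :: "'a xi \<Rightarrow> ('a set \<times> 'a set \<Rightarrow> 'k::zero) set" where
  "Fun_space m = {f. \<forall>p. p \<notin> m \<longrightarrow> f p = 0}"

definition push :: "'a::topological_space xi \<Rightarrow> 'a xi \<Rightarrow> ('a set \<times> 'a set \<Rightarrow> 'k::comm_monoid_add) \<Rightarrow> ('a set \<times> 'a set \<Rightarrow> 'k)" where
  "push m n f = (\<lambda>q. if q \<in> n then (\<Sum>p\<in>{p\<in>m. proj m n p = q}. f p) else 0)"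

definition pull :: "'a::topological_space xi \<Rightarrow> 'a xi \<Rightarrow> ('a set \<times> 'a set \<Rightarrow> 'k::zero) \<Rightarrow> ('a set \<times> 'a set \<Rightarrow> 'k)" where
  "pull m n f = (\<lambda>p. if p \<in> m then f (proj m n p) else 0)"

end

theory Submission
  imports Defs
begin

text \<open>The spaces \<open>E\<^sub>1(m)\<close> and the maps between them are built from the projections \<open>\<pi>\<^sub>m\<^sub>,\<^sub>n\<close>,
  so linearity and functoriality are formal once \<open>\<pi>\<^sub>m\<^sub>,\<^sub>n(p)\<close> is known to be the unique element of \<open>n\<close>
  below \<open>p\<close>. Uniqueness rests on the classical fact that the closure of a face is a fundamental domain
  for \<open>W\<close>, proved with simple roots, inversion counts and the exchange condition.
  (MBS2) is a reindexing: over \<open>x \<in> n\<close>, the pairs \<open>(m, r)\<close> with \<open>m \<in> Sup(m', n)\<close> and \<open>\<pi>\<^sub>m\<^sub>,\<^sub>n(r) = x\<close>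
  correspond to the \<open>p \<in> m'\<close> with \<open>\<pi>\<^sub>m\<^sub>'\<^sub>,\<^sub>n\<^sub>'(p) = \<pi>\<^sub>n\<^sub>,\<^sub>n\<^sub>'(x)\<close>, via \<open>r = (C\<^sub>p, D\<^sub>x)\<close>.
  For (MBS3), anodyne projections are bijective: if \<open>w \<in> W\<close> moves \<open>p\<close> to \<open>p'\<close> over the same \<open>q\<close>,
  then \<open>w\<close> fixes \<open>q\<close>; as \<open>p\<close> and \<open>q\<close> lie in one stratum, the roots vanishing on \<open>q\<close> are those
  vanishing on \<open>p\<close>, so \<open>w\<close> fixes \<open>p\<close> by Steinberg's theorem.\<close>

section \<open>Reflections\<close>

lemma refl_vec_inner: "a \<noteq> 0 \<Longrightarrow> refl_vec a v \<bullet> refl_vec a w = v \<bullet> w"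
  unfolding refl_vec_def by (simp add: algebra_simps inner_commute divide_simps power2_eq_square)

lemma refl_vec_self: "a \<noteq> 0 \<Longrightarrow> refl_vec a a = - a"
  unfolding refl_vec_def by (simp add: algebra_simps scaleR_2)

lemma refl_vec_orthogonal: "a \<bullet> v = 0 \<Longrightarrow> refl_vec a v = v"
  unfolding refl_vec_def by (simp add: inner_commute)

lemma refl_vec_refl_vec: "a \<noteq> 0 \<Longrightarrow> refl_vec a (refl_vec a v) = v"
  unfolding refl_vec_def by (simp add: algebra_simps inner_commute divide_simps)

lemma refl_vec_scaleR: "c \<noteq> 0 \<Longrightarrow> refl_vec (c *\<^sub>R a) = refl_vec a"
  unfolding refl_vec_def by (rule ext) (simp add: divide_simps)

lemma refl_vec_unit: "norm a = 1 \<Longrightarrow> refl_vec a v = v - (2 * (v \<bullet> a)) *\<^sub>R a"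
  unfolding refl_vec_def by (simp add: norm_eq_1)

lemma refl_vec_unit_eqD:
  assumes "norm a = 1" "norm b = 1" "refl_vec a = refl_vec b"
  shows "b = a \<or> b = - a"
proof -
  have "a \<noteq> 0" using assms(1) by auto
  hence "refl_vec b a = - a" using assms(3) refl_vec_self by metis
  hence "2 *\<^sub>R a = (2 * (a \<bullet> b)) *\<^sub>R b" using refl_vec_unit[OF assms(2)] by (simp add: algebra_simps scaleR_2)
  hence a_eq: "a = (a \<bullet> b) *\<^sub>R b" by (metis mult_2 mult.commute scaleR_scaleR zero_neq_numeral scaleR_cancel_left)
  hence "\<bar>a \<bullet> b\<bar> = 1" using assms(1,2) by (metis mult.right_neutral norm_scaleR)
  thus ?thesis using a_eq by (cases "a \<bullet> b \<ge> 0") auto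
qed

lemma inner_unit_square_less_1:
  fixes a b :: "'a::real_inner"
  assumes "norm a = 1" "norm b = 1" "b \<noteq> a" "b \<noteq> - a"
  shows "(a \<bullet> b)\<^sup>2 < 1"
proof -
  let ?c = "a \<bullet> b"
  have e: "(b - ?c *\<^sub>R a) \<bullet> (b - ?c *\<^sub>R a) = 1 - ?c\<^sup>2"
    using assms(1,2) by (simp add: algebra_simps inner_commute norm_eq_1 power2_eq_square)
  hence "?c\<^sup>2 \<le> 1" by (metis diff_ge_0_iff_ge inner_ge_zero)
  moreover have "?c\<^sup>2 \<noteq> 1"
  proof
    assume c: "?c\<^sup>2 = 1"
    hence "b = ?c *\<^sub>R a" using e by simp
    moreover have "?c = 1 \<or> ?c = -1" using c by (simp add: power2_eq_1_iff)
    ultimately show False using assms(3,4) by auto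
  qed
  ultimately show ?thesis by simp
qed

lemma small_perturbation_keeps_sign:
  fixes f g :: "'b \<Rightarrow> real"
  assumes "finite G"
  shows "\<exists>e>0. \<forall>y\<in>G. (f y > 0 \<longrightarrow> f y + e * g y > 0) \<and> (f y < 0 \<longrightarrow> f y + e * g y < 0)"
proof -
  have lim: "((\<lambda>e. f y + e * g y) \<longlongrightarrow> f y) (at_right 0)" for y
    by (auto intro!: tendsto_eq_intros)
  have "\<forall>\<^sub>F e in at_right (0::real). \<forall>y\<in>G. (f y > 0 \<longrightarrow> f y + e * g y > 0) \<and> (f y < 0 \<longrightarrow> f y + e * g y < 0)"
    by (intro eventually_ball_finite[OF assms] ballI eventually_conj)
       (auto intro: eventually_mono[OF order_tendstoD(1)[OF lim]] eventually_mono[OF order_tendstoD(2)[OF lim]])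
  with eventually_at_right_less have "\<forall>\<^sub>F e in at_right (0::real). e > 0 \<and>
      (\<forall>y\<in>G. (f y > 0 \<longrightarrow> f y + e * g y > 0) \<and> (f y < 0 \<longrightarrow> f y + e * g y < 0))"
    by (rule eventually_conj)
  thus ?thesis using eventually_happens'[OF trivial_limit_at_right_real] by blast
qed

lemma exists_generic_combination:
  fixes x y :: "'a::real_inner"
  assumes "finite A"
  shows "\<exists>t::real. \<forall>a\<in>A. a \<bullet> (x + t *\<^sub>R y) = 0 \<longrightarrow> a \<bullet> x = 0 \<and> a \<bullet> y = 0"
proof -
  obtain t :: real where t: "t \<notin> (\<lambda>a. - (a \<bullet> x) / (a \<bullet> y)) ` A"
    using ex_new_if_finite[OF infinite_UNIV_char_0] assms by blast
  have "a \<bullet> x = 0 \<and> a \<bullet> y = 0" if "a \<in> A" "a \<bullet> (x + t *\<^sub>R y) = 0" for a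
  proof -
    have "a \<bullet> x + t * (a \<bullet> y) = 0" using that(2) by (simp add: inner_add_right)
    moreover have "a \<bullet> y = 0"
    proof (rule ccontr)
      assume "a \<bullet> y \<noteq> 0"
      hence "t = - (a \<bullet> x) / (a \<bullet> y)" using calculation by (simp add: field_simps)
      thus False using t that(1) by blast
    qed
    ultimately show ?thesis by simp
  qed
  thus ?thesis by blast
qed

fun refl_word :: "'a::real_inner list \<Rightarrow> 'a \<Rightarrow> 'a" where
  "refl_word [] = id"
| "refl_word (a # l) = refl_vec a \<circ> refl_word l"

lemma refl_word_append: "refl_word (l1 @ l2) = refl_word l1 \<circ> refl_word l2"
  by (induction l1) auto

lemma refl_word_rev_cancel: "0 \<notin> set l \<Longrightarrow> refl_word (rev l) (refl_word l x) = x"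
proof (induction l arbitrary: x)
  case (Cons a l)
  thus ?case by (simp add: refl_word_append refl_vec_refl_vec)
qed simp

lemma refl_word_rev_cancel': "0 \<notin> set l \<Longrightarrow> refl_word l (refl_word (rev l) x) = x"
  using refl_word_rev_cancel[of "rev l"] by simp

lemma refl_word_fixes: "\<forall>a\<in>set l. a \<bullet> v = 0 \<Longrightarrow> refl_word l v = v"
  by (induction l) (auto simp: refl_vec_orthogonal)

locale reflection_group =
  fixes W :: "('a::euclidean_space \<Rightarrow> 'a) set"
  assumes finite_reflection_group: "finite_reflection_group W"
begin

lemma finite_W: "finite W" and id_W: "id \<in> W" and comp_W: "v \<in> W \<Longrightarrow> w \<in> W \<Longrightarrow> v \<circ> w \<in> W"
  and orthogonal_transformation_W: "w \<in> W \<Longrightarrow> orthogonal_transformation w"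
  and W_reflection_product: "w \<in> W \<Longrightarrow> \<exists>rs. set rs \<subseteq> reflections W \<and> w = foldr (\<circ>) rs id"
  using finite_reflection_group unfolding finite_reflection_group_def by auto

lemma linear_W: "w \<in> W \<Longrightarrow> linear w"
  using orthogonal_transformation_W orthogonal_transformation_linear by blast

lemma inner_W: "w \<in> W \<Longrightarrow> w x \<bullet> w y = x \<bullet> y"
  using orthogonal_transformation_W orthogonal_transformation_def by blast

lemma norm_W: "w \<in> W \<Longrightarrow> norm (w x) = norm x"
  using orthogonal_transformation_W orthogonal_transformation_norm by blast

lemma bij_W: "w \<in> W \<Longrightarrow> bij w"
  using orthogonal_transformation_W orthogonal_transformation_bij by blast

lemma W_inv_apply [simp]: "w \<in> W \<Longrightarrow> w (inv w x) = x" "w \<in> W \<Longrightarrow> inv w (w x) = x"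
  using bij_W by (auto simp: bij_is_surj bij_is_inj surj_f_inv_f)

lemma inv_W: assumes w: "w \<in> W" shows "inv w \<in> W"
proof -
  have "inj_on ((\<circ>) w) W"
    using bij_W[OF w] by (auto intro!: inj_onI simp: fun_eq_iff bij_def inj_eq)
  moreover have "(\<circ>) w ` W \<subseteq> W" using comp_W w by blast
  ultimately have "(\<circ>) w ` W = W" using endo_inj_surj finite_W by blast
  then obtain v where "v \<in> W" "w \<circ> v = id" using id_W by (metis imageE)
  moreover from this have "inv w x = v x" for x by (metis W_inv_apply(2)[OF w] comp_apply id_apply)
  ultimately show ?thesis by (metis ext)
qed

lemma inner_inv_W: "w \<in> W \<Longrightarrow> a \<bullet> w y = inv w a \<bullet> y"
  by (metis W_inv_apply(1) inner_W)

lemma refl_vec_conj_W: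
  assumes "w \<in> W" "a \<noteq> 0"
  shows "w \<circ> refl_vec a \<circ> inv w = refl_vec (w a)"
proof
  fix x
  have "(w \<circ> refl_vec a \<circ> inv w) x = x - (2 * (inv w x \<bullet> a) / (a \<bullet> a)) *\<^sub>R w a"
    unfolding refl_vec_def using assms linear_W[OF assms(1)] by (simp add: linear_diff linear_scale)
  also have "\<dots> = refl_vec (w a) x"
    unfolding refl_vec_def using assms by (simp add: inner_W inner_inv_W inner_commute)
  finally show "(w \<circ> refl_vec a \<circ> inv w) x = refl_vec (w a) x" .
qed

lemma roots_W: assumes "a \<in> roots W" "w \<in> W" shows "w a \<in> roots W"
proof -
  have "a \<noteq> 0" "refl_vec a \<in> W" using assms(1) unfolding roots_def by auto
  moreover from this have "refl_vec (w a) \<in> W"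
    using refl_vec_conj_W[OF assms(2)] comp_W[OF comp_W[OF assms(2)] inv_W[OF assms(2)]] by metis
  moreover have "w a \<noteq> 0" using calculation(1) norm_W[OF assms(2)] by (metis norm_eq_zero)
  ultimately show ?thesis unfolding roots_def by blast
qed

definition unit_roots :: "'a set" where "unit_roots = {a \<in> roots W. norm a = 1}"

lemma unit_rootsD: "a \<in> unit_roots \<Longrightarrow> a \<in> roots W" "a \<in> unit_roots \<Longrightarrow> norm a = 1"
  "a \<in> unit_roots \<Longrightarrow> a \<noteq> 0" "a \<in> unit_roots \<Longrightarrow> refl_vec a \<in> W"
  unfolding unit_roots_def roots_def by auto

lemma unit_roots_W: "a \<in> unit_roots \<Longrightarrow> w \<in> W \<Longrightarrow> w a \<in> unit_roots"
  unfolding unit_roots_def using roots_W norm_W by auto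

lemma uminus_unit_roots: "a \<in> unit_roots \<Longrightarrow> - a \<in> unit_roots"
  unfolding unit_roots_def roots_def using refl_vec_scaleR[of "-1" a] by auto

lemma roots_normalize: "a \<in> roots W \<Longrightarrow> (1 / norm a) *\<^sub>R a \<in> unit_roots"
  unfolding unit_roots_def roots_def using refl_vec_scaleR[of "1 / norm a" a] by auto

lemma finite_unit_roots: "finite unit_roots"
proof -
  have "unit_roots \<subseteq> (\<Union>s\<in>W. {a. norm a = 1 \<and> refl_vec a = s})"
    unfolding unit_roots_def roots_def by auto
  moreover have "{a. norm a = 1 \<and> refl_vec a = s} \<subseteq> {b, - b}" if "norm b = 1" "refl_vec b = s" for s b
    using refl_vec_unit_eqD that by fastforce
  hence "finite {a. norm a = 1 \<and> refl_vec a = s}" for s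
    by (cases "\<exists>b. norm b = 1 \<and> refl_vec b = s") (auto intro: finite_subset)
  ultimately show ?thesis using finite_W by (blast intro: finite_subset)
qed

lemma arr_face_unit_roots: "arr_face W x = {y. \<forall>a\<in>unit_roots. sgn (a \<bullet> y) = sgn (a \<bullet> x)}"
proof (intro set_eqI iffI)
  fix y assume "y \<in> arr_face W x"
  thus "y \<in> {y. \<forall>a\<in>unit_roots. sgn (a \<bullet> y) = sgn (a \<bullet> x)}"
    using unit_rootsD(1) unfolding arr_face_def by blast
next
  fix y assume y: "y \<in> {y. \<forall>a\<in>unit_roots. sgn (a \<bullet> y) = sgn (a \<bullet> x)}"
  have "sgn (a \<bullet> y) = sgn (a \<bullet> x)" if a: "a \<in> roots W" for a
  proof -
    have "norm a > 0" using a unfolding roots_def by auto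
    hence scale: "sgn (a \<bullet> v) = sgn (((1 / norm a) *\<^sub>R a) \<bullet> v)" for v by (simp add: sgn_mult)
    have "sgn (((1 / norm a) *\<^sub>R a) \<bullet> y) = sgn (((1 / norm a) *\<^sub>R a) \<bullet> x)"
      using y roots_normalize[OF a] by blast
    thus ?thesis by (simp only: scale)
  qed
  thus "y \<in> arr_face W x" unfolding arr_face_def by blast
qed

lemma arr_face_self: "x \<in> arr_face W x"
  unfolding arr_face_def by auto

lemma image_arr_face_W: assumes "w \<in> W" shows "w ` arr_face W x = arr_face W (w x)"
proof -
  have mem: "v y \<in> arr_face W (v x)" if v: "v \<in> W" and y: "y \<in> arr_face W x" for v x y
  proof -
    have "sgn (a \<bullet> v y) = sgn (a \<bullet> v x)" if "a \<in> roots W" for a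
    proof -
      have "inv v a \<in> roots W" using roots_W inv_W v that by blast
      thus ?thesis using y inner_inv_W[OF v] unfolding arr_face_def by simp
    qed
    thus ?thesis unfolding arr_face_def by blast
  qed
  show ?thesis
  proof
    show "w ` arr_face W x \<subseteq> arr_face W (w x)" using mem assms by blast
    show "arr_face W (w x) \<subseteq> w ` arr_face W x"
    proof
      fix z assume "z \<in> arr_face W (w x)"
      hence "inv w z \<in> arr_face W x" using mem[OF inv_W[OF assms]] assms by fastforce
      thus "z \<in> w ` arr_face W x" using W_inv_apply(1)[OF assms] by (metis image_eqI)
    qed
  qed
qed

lemma finite_arr_faces: "finite (arr_faces W)"
proof -
  let ?face_of_signs = "\<lambda>g. {y. \<forall>a\<in>unit_roots. sgn (a \<bullet> y) = g a}"
  have "arr_faces W \<subseteq> ?face_of_signs ` (unit_roots \<rightarrow>\<^sub>E {-1, 0, 1})"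
  proof
    fix F assume "F \<in> arr_faces W"
    then obtain x where F: "F = arr_face W x" unfolding arr_faces_def by auto
    have "restrict (\<lambda>a. sgn (a \<bullet> x)) unit_roots \<in> unit_roots \<rightarrow>\<^sub>E {-1, 0, 1}" by (auto simp: sgn_real_def)
    moreover have "F = ?face_of_signs (restrict (\<lambda>a. sgn (a \<bullet> x)) unit_roots)"
      using F arr_face_unit_roots by auto
    ultimately show "F \<in> ?face_of_signs ` (unit_roots \<rightarrow>\<^sub>E {-1, 0, 1})" by blast
  qed
  moreover have "finite (unit_roots \<rightarrow>\<^sub>E ({-1, 0, 1} :: real set))"
    using finite_unit_roots by (intro finite_PiE) auto
  ultimately show ?thesis using finite_subset by blast
qed

lemma closure_arr_face_sign:
  assumes "y \<in> closure (arr_face W x)" "a \<in> roots W"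
  shows "a \<bullet> x > 0 \<Longrightarrow> a \<bullet> y \<ge> 0" "a \<bullet> x = 0 \<Longrightarrow> a \<bullet> y = 0" "a \<bullet> x < 0 \<Longrightarrow> a \<bullet> y \<le> 0"
proof -
  have closure_in: "y \<in> S" if "closed S" "\<And>v. sgn (a \<bullet> v) = sgn (a \<bullet> x) \<Longrightarrow> v \<in> S" for S
  proof -
    have "arr_face W x \<subseteq> S" using that(2) assms(2) unfolding arr_face_def by blast
    thus ?thesis using closure_minimal[OF _ that(1)] assms(1) by blast
  qed
  show "a \<bullet> x > 0 \<Longrightarrow> a \<bullet> y \<ge> 0"
    using closure_in[of "{v. a \<bullet> v \<ge> 0}"] by (simp add: closed_halfspace_ge sgn_1_pos)
  show "a \<bullet> x = 0 \<Longrightarrow> a \<bullet> y = 0"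
    using closure_in[of "{v. a \<bullet> v = 0}"] by (simp add: closed_hyperplane sgn_zero_iff)
  show "a \<bullet> x < 0 \<Longrightarrow> a \<bullet> y \<le> 0"
    using closure_in[of "{v. a \<bullet> v \<le> 0}"] by (simp add: closed_halfspace_le sgn_1_neg)
qed

lemma image_closure_W: "w \<in> W \<Longrightarrow> w ` closure S = closure (w ` S)"
  using closure_injective_linear_image linear_W bij_W bij_is_inj by blast

lemma refl_word_W: "set l \<subseteq> unit_roots \<Longrightarrow> refl_word l \<in> W"
  by (induction l) (auto simp: id_W comp_W unit_rootsD(4))

lemma inv_refl_word: assumes "set l \<subseteq> unit_roots" shows "inv (refl_word l) = refl_word (rev l)"
proof -
  have "0 \<notin> set l" using assms unit_rootsD(3) by blast
  thus ?thesis by (intro inv_unique_comp) (simp_all add: fun_eq_iff refl_word_rev_cancel refl_word_rev_cancel')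
qed

end

section \<open>Simple roots and the fundamental chamber\<close>

locale chamber = reflection_group W for W :: "('a::euclidean_space \<Rightarrow> 'a) set" +
  fixes c0 :: 'a
  assumes c0_regular: "\<forall>a\<in>unit_roots. a \<bullet> c0 \<noteq> 0"
begin

definition pos_roots :: "'a set" where "pos_roots = {a \<in> unit_roots. a \<bullet> c0 > 0}"

definition dual_cone :: "'a set \<Rightarrow> 'a set" where "dual_cone D = {v. \<forall>a\<in>D. a \<bullet> v \<ge> 0}"

definition fund_chamber :: "'a set" where "fund_chamber = dual_cone pos_roots"

lemma pos_rootsD: "a \<in> pos_roots \<Longrightarrow> a \<in> unit_roots" "a \<in> pos_roots \<Longrightarrow> a \<bullet> c0 > 0"
  unfolding pos_roots_def by auto

lemma finite_pos_roots: "finite pos_roots"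
  unfolding pos_roots_def using finite_unit_roots by auto

lemma unit_root_not_pos: "a \<in> unit_roots \<Longrightarrow> a \<notin> pos_roots \<Longrightarrow> a \<bullet> c0 < 0 \<and> - a \<in> pos_roots"
  using c0_regular uminus_unit_roots unfolding pos_roots_def by force

lemma uminus_pos_roots: "a \<in> pos_roots \<Longrightarrow> - a \<notin> pos_roots"
  unfolding pos_roots_def by auto

lemma fund_chamber_pos_roots: "v \<in> fund_chamber \<Longrightarrow> a \<in> pos_roots \<Longrightarrow> a \<bullet> v \<ge> 0"
  unfolding fund_chamber_def dual_cone_def by auto

lemma ex_minimal_dual_basis:
  "\<exists>D. D \<subseteq> pos_roots \<and> dual_cone D = fund_chamber \<and> (\<forall>a\<in>D. dual_cone (D - {a}) \<noteq> fund_chamber)"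
proof -
  let ?P = "\<lambda>D. D \<subseteq> pos_roots \<and> dual_cone D = fund_chamber"
  obtain D where D: "?P D" "\<And>D'. ?P D' \<Longrightarrow> card D \<le> card D'"
    using ex_has_least_nat[of ?P pos_roots card] unfolding fund_chamber_def by blast
  have "finite D" using D(1) finite_pos_roots finite_subset by blast
  hence "\<not> ?P (D - {a})" if "a \<in> D" for a using D(2)[of "D - {a}"] card_Diff1_less that by fastforce
  thus ?thesis using D(1) by blast
qed

definition simple_roots :: "'a set" where
  "simple_roots = (SOME D. D \<subseteq> pos_roots \<and> dual_cone D = fund_chamber \<and>
     (\<forall>a\<in>D. dual_cone (D - {a}) \<noteq> fund_chamber))"

lemma simple_roots: "simple_roots \<subseteq> pos_roots" "dual_cone simple_roots = fund_chamber"
  "\<And>a. a \<in> simple_roots \<Longrightarrow> dual_cone (simple_roots - {a}) \<noteq> fund_chamber"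
  using someI_ex[OF ex_minimal_dual_basis] unfolding simple_roots_def[symmetric] by auto

lemma simple_rootsD: "a \<in> simple_roots \<Longrightarrow> a \<in> pos_roots" "a \<in> simple_roots \<Longrightarrow> a \<in> unit_roots"
  using simple_roots(1) pos_rootsD(1) by blast+

lemma fund_chamber_iff: "v \<in> fund_chamber \<longleftrightarrow> (\<forall>a\<in>simple_roots. a \<bullet> v \<ge> 0)"
  using simple_roots(2) unfolding dual_cone_def by blast

lemma exists_wall_point:
  assumes al: "al \<in> simple_roots"
  shows "\<exists>p. al \<bullet> p = 0 \<and> (\<forall>g\<in>simple_roots - {al}. g \<bullet> p > 0)"
proof -
  have "fund_chamber \<subseteq> dual_cone (simple_roots - {al})" using simple_roots(2) unfolding dual_cone_def by auto
  then obtain v where v: "v \<in> dual_cone (simple_roots - {al})" "v \<notin> fund_chamber"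
    using simple_roots(3)[OF al] by blast
  have vg: "\<forall>g\<in>simple_roots - {al}. g \<bullet> v \<ge> 0" using v(1) unfolding dual_cone_def by blast
  have av: "al \<bullet> v < 0" using v(2) vg fund_chamber_iff by force
  have ac: "al \<bullet> c0 > 0" using al simple_rootsD(1) pos_rootsD(2) by blast
  define t where "t = (al \<bullet> c0) / (al \<bullet> c0 - al \<bullet> v)"
  have t: "0 < t" "t < 1" using av ac unfolding t_def by (auto simp: divide_simps)
  define p where "p = (1 - t) *\<^sub>R c0 + t *\<^sub>R v"
  have "al \<bullet> p = 0" unfolding p_def t_def using av ac by (simp add: inner_add_right divide_simps algebra_simps)
  moreover have "g \<bullet> p > 0" if g: "g \<in> simple_roots - {al}" for g
  proof -
    have "(1 - t) * (g \<bullet> c0) > 0" using g t simple_rootsD(1) pos_rootsD(2) by auto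
    moreover have "t * (g \<bullet> v) \<ge> 0" using vg g t by auto
    ultimately show ?thesis unfolding p_def by (simp add: inner_add_right)
  qed
  ultimately show ?thesis by blast
qed

lemma wall_point_fund_chamber:
  "al \<in> simple_roots \<Longrightarrow> al \<bullet> p = 0 \<Longrightarrow> \<forall>g\<in>simple_roots - {al}. g \<bullet> p > 0 \<Longrightarrow> p \<in> fund_chamber"
  unfolding fund_chamber_iff by (metis DiffI empty_iff insert_iff order_less_imp_le order_refl)

lemma wall_point_pos_roots:
  assumes al: "al \<in> simple_roots" and p: "al \<bullet> p = 0" "\<forall>g\<in>simple_roots - {al}. g \<bullet> p > 0"
    and b: "b \<in> pos_roots" "b \<noteq> al"
  shows "b \<bullet> p > 0"
proof -
  have "b \<bullet> p \<noteq> 0"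
  proof
    assume bp: "b \<bullet> p = 0"
    have al_unit: "norm al = 1" and b_unit: "norm b = 1" using al b(1) simple_rootsD pos_rootsD unit_rootsD by auto
    txt \<open>Push \<open>p\<close> along the wall of \<open>al\<close> in the direction \<open>u\<close> pointing to the negative side of \<open>b\<close>.\<close>
    define u where "u = (b \<bullet> al) *\<^sub>R al - b"
    have au: "al \<bullet> u = 0" unfolding u_def using al_unit by (simp add: inner_diff_right norm_eq_1 inner_commute)
    have "b \<noteq> - al" using uminus_pos_roots b(1) al simple_rootsD(1) by blast
    hence "(al \<bullet> b)\<^sup>2 < 1" using inner_unit_square_less_1[OF al_unit b_unit b(2)] by blast
    hence bu: "b \<bullet> u < 0" unfolding u_def using b_unit
      by (simp add: inner_diff_right norm_eq_1 inner_commute power2_eq_square)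
    obtain e where e: "e > 0" "\<forall>g\<in>simple_roots - {al}. g \<bullet> p > 0 \<longrightarrow> g \<bullet> p + e * (g \<bullet> u) > 0"
      using small_perturbation_keeps_sign[of "simple_roots - {al}" "\<lambda>g. g \<bullet> p" "\<lambda>g. g \<bullet> u"]
        finite_pos_roots simple_roots(1) by (meson finite_Diff finite_subset)
    have "p + e *\<^sub>R u \<in> fund_chamber"
      using p e au by (intro wall_point_fund_chamber[OF al]) (auto simp: inner_add_right)
    hence "b \<bullet> (p + e *\<^sub>R u) \<ge> 0" using fund_chamber_pos_roots b(1) by blast
    moreover have "b \<bullet> (p + e *\<^sub>R u) < 0" using bp bu e(1) by (simp add: inner_add_right mult_pos_neg)
    ultimately show False by simp
  qed
  moreover have "b \<bullet> p \<ge> 0" using wall_point_fund_chamber[OF al p] fund_chamber_pos_roots b(1) by blast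
  ultimately show ?thesis by simp
qed

lemma simple_refl_pos_roots:
  assumes al: "al \<in> simple_roots" and b: "b \<in> pos_roots" "b \<noteq> al"
  shows "refl_vec al b \<in> pos_roots"
proof (rule ccontr)
  obtain p where p: "al \<bullet> p = 0" "\<forall>g\<in>simple_roots - {al}. g \<bullet> p > 0" using exists_wall_point[OF al] by blast
  have al0: "al \<noteq> 0" using al simple_rootsD(2) unit_rootsD(3) by blast
  have "refl_vec al b \<bullet> p = b \<bullet> p"
    using refl_vec_inner[OF al0, of b p] refl_vec_orthogonal[OF p(1)] by simp
  hence "refl_vec al b \<bullet> p > 0" using wall_point_pos_roots[OF al p b] by simp
  moreover assume "refl_vec al b \<notin> pos_roots"
  hence "- refl_vec al b \<in> pos_roots"
    using unit_root_not_pos unit_roots_W b(1) pos_rootsD(1) simple_rootsD(2)[OF al] unit_rootsD(4) by blast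
  hence "(- refl_vec al b) \<bullet> p \<ge> 0" using wall_point_fund_chamber[OF al p] fund_chamber_pos_roots by blast
  ultimately show False by simp
qed

lemma exists_simple_root_inverted:
  assumes w: "w \<in> W" and b: "b \<in> pos_roots" and wb: "w b \<bullet> c0 < 0"
  shows "\<exists>al\<in>simple_roots. w al \<bullet> c0 < 0"
proof (rule ccontr)
  assume "\<not> (\<exists>al\<in>simple_roots. w al \<bullet> c0 < 0)"
  hence "inv w c0 \<in> fund_chamber" unfolding fund_chamber_iff using w by (metis inner_commute inner_inv_W not_less)
  hence "b \<bullet> inv w c0 \<ge> 0" using fund_chamber_pos_roots b by blast
  thus False using wb w by (metis inner_commute inner_inv_W not_less)
qed

lemma exists_simple_root_acute:
  assumes b: "b \<in> pos_roots" shows "\<exists>al\<in>simple_roots. b \<bullet> al > 0"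
proof (rule ccontr)
  assume "\<not> (\<exists>al\<in>simple_roots. b \<bullet> al > 0)"
  hence "- b \<in> fund_chamber" unfolding fund_chamber_iff by (simp add: inner_commute not_less)
  hence "b \<bullet> (- b) \<ge> 0" using fund_chamber_pos_roots b by blast
  moreover have "b \<noteq> 0" using b pos_rootsD(1) unit_rootsD(3) by blast
  ultimately show False by (metis inner_gt_zero_iff inner_minus_right neg_0_le_iff_le not_le)
qed

definition inversions :: "('a \<Rightarrow> 'a) \<Rightarrow> 'a set" where "inversions w = {b \<in> pos_roots. w b \<bullet> c0 < 0}"

lemma finite_inversions: "finite (inversions w)"
  unfolding inversions_def using finite_pos_roots by auto

lemma card_inversions_simple_less:
  assumes w: "w \<in> W" and al: "al \<in> simple_roots" and wa: "w al \<bullet> c0 < 0"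
  shows "card (inversions (w \<circ> refl_vec al)) < card (inversions w)"
proof -
  have al0: "al \<noteq> 0" using al simple_rootsD(2) unit_rootsD(3) by blast
  have "inversions (w \<circ> refl_vec al) \<subseteq> refl_vec al ` (inversions w - {al})"
  proof
    fix b assume "b \<in> inversions (w \<circ> refl_vec al)"
    hence b: "b \<in> pos_roots" "w (refl_vec al b) \<bullet> c0 < 0" unfolding inversions_def by auto
    have "b \<noteq> al" using b(2) wa refl_vec_self[OF al0] linear_W[OF w] by (auto simp: linear_neg)
    hence "refl_vec al b \<in> pos_roots" using simple_refl_pos_roots al b(1) by blast
    moreover have "refl_vec al b \<noteq> al"
    proof
      assume "refl_vec al b = al"
      hence "b = - al" using refl_vec_refl_vec[OF al0, of b] refl_vec_self[OF al0] by metis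
      thus False using b(1) uminus_pos_roots simple_rootsD(1)[OF al] by blast
    qed
    ultimately have "refl_vec al b \<in> inversions w - {al}" using b(2) unfolding inversions_def by auto
    thus "b \<in> refl_vec al ` (inversions w - {al})" using refl_vec_refl_vec[OF al0, of b] by (metis image_eqI)
  qed
  hence "card (inversions (w \<circ> refl_vec al)) \<le> card (inversions w - {al})"
    by (meson card_image_le card_mono finite_Diff finite_imageI finite_inversions le_trans)
  also have "\<dots> < card (inversions w)"
    using wa al simple_rootsD(1) by (intro card_Diff1_less finite_inversions) (simp add: inversions_def)
  finally show ?thesis .
qed

lemma inversions_refl_vec_nonempty:
  assumes w: "w \<in> W" and b: "b \<in> pos_roots" and wb: "w b \<bullet> c0 > 0"
  shows "inversions (w \<circ> refl_vec b) \<noteq> {}"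
proof -
  have "b \<noteq> 0" using b pos_rootsD(1) unit_rootsD(3) by blast
  hence "w (refl_vec b b) = - w b" using linear_W[OF w] by (simp add: refl_vec_self linear_neg)
  thus ?thesis unfolding inversions_def using b wb by auto
qed

lemma pos_root_conj_simple:
  assumes "b \<in> pos_roots" shows "\<exists>l al. set l \<subseteq> simple_roots \<and> al \<in> simple_roots \<and> b = refl_word l al"
  using assms
proof (induction "card {x\<in>pos_roots. x \<bullet> c0 < b \<bullet> c0}" arbitrary: b rule: less_induct)
  case less
  show ?case
  proof (cases "b \<in> simple_roots")
    case True
    thus ?thesis by (metis empty_subsetI empty_set refl_word.simps(1) id_apply)
  next
    case False
    txt \<open>Reflecting in a simple root \<open>al\<close> with \<open>b \<bullet> al > 0\<close> lowers the height \<open>b \<bullet> c0\<close>.\<close>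
    obtain al where al: "al \<in> simple_roots" "b \<bullet> al > 0" using exists_simple_root_acute less.prems by blast
    have al0: "al \<noteq> 0" using al simple_rootsD(2) unit_rootsD(3) by blast
    define b' where "b' = refl_vec al b"
    have b'_pos: "b' \<in> pos_roots" unfolding b'_def using simple_refl_pos_roots al(1) less.prems False by blast
    have "b' \<bullet> c0 = b \<bullet> c0 - 2 * (b \<bullet> al) * (al \<bullet> c0)"
      unfolding b'_def refl_vec_unit[OF unit_rootsD(2)[OF simple_rootsD(2)[OF al(1)]]] by (simp add: inner_diff_left)
    moreover have "al \<bullet> c0 > 0" using al simple_rootsD(1) pos_rootsD(2) by blast
    ultimately have lt: "b' \<bullet> c0 < b \<bullet> c0" using al(2) by simp
    have "{x\<in>pos_roots. x \<bullet> c0 < b' \<bullet> c0} \<subset> {x\<in>pos_roots. x \<bullet> c0 < b \<bullet> c0}"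
      using lt b'_pos by auto
    hence "card {x\<in>pos_roots. x \<bullet> c0 < b' \<bullet> c0} < card {x\<in>pos_roots. x \<bullet> c0 < b \<bullet> c0}"
      using finite_pos_roots by (intro psubset_card_mono) auto
    from less.hyps[OF this b'_pos] obtain l al' where l: "set l \<subseteq> simple_roots" "al' \<in> simple_roots" "b' = refl_word l al'"
      by blast
    have "b = refl_word (al # l) al'" using l(3) refl_vec_refl_vec[OF al0] unfolding b'_def by (metis comp_apply refl_word.simps(2))
    thus ?thesis using l al(1) by (metis insert_subset list.simps(15))
  qed
qed

lemma simple_word_W: "set l \<subseteq> simple_roots \<Longrightarrow> refl_word l \<in> W"
  using refl_word_W simple_rootsD(2) by blast

lemma refl_vec_simple_word:
  assumes "b \<in> pos_roots" shows "\<exists>l. set l \<subseteq> simple_roots \<and> refl_vec b = refl_word l"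
proof -
  obtain l al where l: "set l \<subseteq> simple_roots" "al \<in> simple_roots" "b = refl_word l al"
    using pos_root_conj_simple assms by blast
  have "al \<noteq> 0" using l(2) simple_rootsD(2) unit_rootsD(3) by blast
  hence "refl_vec b = refl_word l \<circ> refl_vec al \<circ> inv (refl_word l)"
    using refl_vec_conj_W[OF simple_word_W[OF l(1)]] l(3) by simp
  also have "\<dots> = refl_word (l @ [al] @ rev l)"
    using inv_refl_word l(1) simple_rootsD(2) by (simp add: refl_word_append comp_assoc subset_iff)
  finally show ?thesis using l by (intro exI[of _ "l @ [al] @ rev l"]) auto
qed

lemma W_simple_word:
  assumes "w \<in> W" shows "\<exists>l. set l \<subseteq> simple_roots \<and> w = refl_word l"
proof -
  have refl_word_reflection: "\<exists>l. set l \<subseteq> simple_roots \<and> r = refl_word l" if "r \<in> reflections W" for r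
  proof -
    have "r \<in> W" "\<exists>a. a \<noteq> 0 \<and> r = refl_vec a" using that unfolding reflections_def by auto
    then obtain a where a: "a \<noteq> 0" "r = refl_vec a" "a \<in> roots W" unfolding roots_def by auto
    define u where "u = (1 / norm a) *\<^sub>R a"
    have u: "u \<in> unit_roots" "r = refl_vec u"
      unfolding u_def using roots_normalize[OF a(3)] a(1,2) refl_vec_scaleR[of "1 / norm a" a] by auto
    show ?thesis
    proof (cases "u \<in> pos_roots")
      case True thus ?thesis using refl_vec_simple_word u(2) by blast
    next
      case False
      hence "- u \<in> pos_roots" using unit_root_not_pos u(1) by blast
      moreover have "refl_vec (- u) = refl_vec u" using refl_vec_scaleR[of "-1" u] by simp
      ultimately show ?thesis using refl_vec_simple_word u(2) by metis
    qed
  qed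
  obtain rs where rs: "set rs \<subseteq> reflections W" "w = foldr (\<circ>) rs id" using W_reflection_product assms by blast
  have "\<exists>l. set l \<subseteq> simple_roots \<and> foldr (\<circ>) rs id = refl_word l" using rs(1)
  proof (induction rs)
    case Nil thus ?case by (intro exI[of _ "[]"]) simp
  next
    case (Cons r rs)
    then obtain l1 l2 where "set l1 \<subseteq> simple_roots" "r = refl_word l1"
      and "set l2 \<subseteq> simple_roots" "foldr (\<circ>) rs id = refl_word l2"
      using refl_word_reflection by (metis insert_subset list.simps(15))
    hence "foldr (\<circ>) (r # rs) id = refl_word (l1 @ l2)" by (simp only: foldr_Cons comp_apply refl_word_append)
    moreover have "set (l1 @ l2) \<subseteq> simple_roots" using \<open>set l1 \<subseteq> simple_roots\<close> \<open>set l2 \<subseteq> simple_roots\<close> by simp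
    ultimately show ?case by blast
  qed
  thus ?thesis using rs(2) by simp
qed

lemma exchange:
  assumes "set l \<subseteq> simple_roots" "b \<in> simple_roots" "refl_word l b \<bullet> c0 < 0"
  shows "\<exists>l1 a l2. l = l1 @ a # l2 \<and> refl_word l2 b = a"
  using assms
proof (induction l)
  case Nil
  thus ?case using simple_rootsD(1) pos_rootsD(2) by fastforce
next
  case (Cons a l)
  show ?case
  proof (cases "refl_word l b \<bullet> c0 < 0")
    case True
    with Cons obtain l1 a' l2 where "l = l1 @ a' # l2" "refl_word l2 b = a'" by auto
    thus ?thesis by (metis append_Cons)
  next
    case False
    have "refl_word l b \<in> unit_roots"
      using Cons.prems simple_word_W unit_roots_W simple_rootsD(2) by (metis insert_subset list.simps(15))
    hence pos: "refl_word l b \<in> pos_roots" using False unit_root_not_pos by blast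
    have "refl_word l b = a"
    proof (rule ccontr)
      assume "refl_word l b \<noteq> a"
      hence "refl_vec a (refl_word l b) \<in> pos_roots" using simple_refl_pos_roots Cons.prems(1) pos by simp
      thus False using Cons.prems(3) pos_rootsD(2) by fastforce
    qed
    thus ?thesis by (metis append_Nil)
  qed
qed

lemma deletion:
  assumes l: "set l \<subseteq> simple_roots" and b: "b \<in> simple_roots" and a: "refl_word l b = a"
  shows "refl_vec a \<circ> refl_word l \<circ> refl_vec b = refl_word l"
proof -
  have l_unit: "set l \<subseteq> unit_roots" using l simple_rootsD(2) by blast
  have b0: "b \<noteq> 0" using b simple_rootsD(2) unit_rootsD(3) by blast
  have "refl_vec a = refl_word l \<circ> refl_vec b \<circ> refl_word (rev l)"
    using refl_vec_conj_W[OF simple_word_W[OF l] b0] inv_refl_word[OF l_unit] a by simp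
  moreover have "0 \<notin> set l" using l_unit unit_rootsD(3) by blast
  ultimately show ?thesis by (simp add: fun_eq_iff refl_word_rev_cancel refl_vec_refl_vec[OF b0])
qed

lemma no_inversions_refl_word:
  assumes "set l \<subseteq> simple_roots" "inversions (refl_word l) = {}" shows "refl_word l = id"
  using assms
proof (induction "length l" arbitrary: l rule: less_induct)
  case less
  show ?case
  proof (cases l rule: rev_exhaust)
    case (snoc l0 b)
    have l0: "set l0 \<subseteq> simple_roots" and b: "b \<in> simple_roots" using less.prems(1) snoc by auto
    have wl: "refl_word l = refl_word l0 \<circ> refl_vec b" using snoc by (simp add: refl_word_append)
    show ?thesis
    proof (cases "refl_word l0 b \<bullet> c0 < 0")
      case True
      from exchange[OF l0 b True] obtain l1 a l2 where l12: "l0 = l1 @ a # l2" "refl_word l2 b = a" by blast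
      have "refl_word l = refl_word l1 \<circ> (refl_vec a \<circ> refl_word l2 \<circ> refl_vec b)"
        using wl l12(1) by (simp add: refl_word_append comp_assoc)
      also have "\<dots> = refl_word (l1 @ l2)"
        using deletion[OF _ b l12(2)] l0 l12(1) by (simp add: refl_word_append)
      finally have "refl_word l = refl_word (l1 @ l2)" .
      moreover have "refl_word (l1 @ l2) = id"
        using less.hyps[of "l1 @ l2"] less.prems calculation snoc l12(1) l0 by auto
      ultimately show ?thesis by simp
    next
      case False
      have "refl_word l0 b \<in> unit_roots" using unit_roots_W simple_word_W[OF l0] simple_rootsD(2)[OF b] by blast
      hence "refl_word l0 b \<bullet> c0 > 0" using False c0_regular by (meson linorder_neqE_linordered_idom)
      thus ?thesis using inversions_refl_vec_nonempty simple_word_W[OF l0] simple_rootsD(1)[OF b] less.prems(2) wl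
        by metis
    qed
  qed simp
qed

lemma no_inversions_id: "w \<in> W \<Longrightarrow> inversions w = {} \<Longrightarrow> w = id"
  using W_simple_word no_inversions_refl_word by metis

lemma fund_chamber_stabilizer:
  assumes "w \<in> W" "x \<in> fund_chamber" "w x \<in> fund_chamber"
  shows "\<exists>l. set l \<subseteq> {al \<in> simple_roots. al \<bullet> x = 0} \<and> w = refl_word l"
  using assms
proof (induction "card (inversions w)" arbitrary: w rule: less_induct)
  case less
  show ?case
  proof (cases "inversions w = {}")
    case True
    thus ?thesis using no_inversions_id less.prems(1) by (intro exI[of _ "[]"]) simp
  next
    case False
    then obtain b where "b \<in> pos_roots" "w b \<bullet> c0 < 0" unfolding inversions_def by auto
    then obtain al where al: "al \<in> simple_roots" "w al \<bullet> c0 < 0"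
      using exists_simple_root_inverted less.prems(1) by blast
    have "w al \<in> unit_roots" using unit_roots_W simple_rootsD(2) al(1) less.prems(1) by blast
    hence "- w al \<in> pos_roots" using unit_root_not_pos al(2) pos_rootsD(2) by (metis less_asym)
    hence "al \<bullet> x \<le> 0" using fund_chamber_pos_roots[OF less.prems(3)] inner_W[OF less.prems(1)] by fastforce
    hence ax: "al \<bullet> x = 0" using fund_chamber_iff less.prems(2) al(1) by (meson order_antisym)
    define w' where "w' = w \<circ> refl_vec al"
    have al0: "al \<noteq> 0" using al(1) simple_rootsD(2) unit_rootsD(3) by blast
    have "w' \<in> W" unfolding w'_def using comp_W less.prems(1) unit_rootsD(4) simple_rootsD(2) al(1) by blast
    moreover have "card (inversions w') < card (inversions w)"
      unfolding w'_def using card_inversions_simple_less less.prems(1) al by blast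
    moreover have "w' x \<in> fund_chamber" using refl_vec_orthogonal[OF ax] less.prems(3) unfolding w'_def by simp
    ultimately obtain l where l: "set l \<subseteq> {al \<in> simple_roots. al \<bullet> x = 0}" "w' = refl_word l"
      using less.hyps less.prems(2) by blast
    have "w = w' \<circ> refl_vec al" unfolding w'_def using refl_vec_refl_vec[OF al0] by (simp add: fun_eq_iff)
    thus ?thesis using l al(1) ax by (intro exI[of _ "l @ [al]"]) (simp add: refl_word_append)
  qed
qed

end

context reflection_group
begin

lemma exists_regular_vector: "\<exists>e. \<forall>a\<in>unit_roots. a \<bullet> e \<noteq> 0"
proof -
  have "negligible (\<Union>a\<in>unit_roots. {x. a \<bullet> x = 0})"
    using finite_unit_roots negligible_hyperplane unit_rootsD(3) by (intro negligible_Union) auto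
  hence "(\<Union>a\<in>unit_roots. {x. a \<bullet> x = 0}) \<noteq> UNIV" using non_negligible_UNIV by metis
  thus ?thesis by blast
qed

lemma exists_chamber_containing_face:
  "\<exists>c0. (\<forall>a\<in>unit_roots. a \<bullet> c0 \<noteq> 0) \<and> (\<forall>a\<in>unit_roots. a \<bullet> h < 0 \<longrightarrow> a \<bullet> c0 < 0)"
proof -
  obtain e where e: "\<forall>a\<in>unit_roots. a \<bullet> e \<noteq> 0" using exists_regular_vector by blast
  obtain \<epsilon> where \<epsilon>: "\<epsilon> > 0"
    "\<forall>a\<in>unit_roots. (a \<bullet> h > 0 \<longrightarrow> a \<bullet> h + \<epsilon> * (a \<bullet> e) > 0) \<and> (a \<bullet> h < 0 \<longrightarrow> a \<bullet> h + \<epsilon> * (a \<bullet> e) < 0)"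
    using small_perturbation_keeps_sign[OF finite_unit_roots, of "\<lambda>a. a \<bullet> h" "\<lambda>a. a \<bullet> e"] by blast
  have "a \<bullet> (h + \<epsilon> *\<^sub>R e) = a \<bullet> h + \<epsilon> * (a \<bullet> e)" for a by (simp add: inner_add_right)
  moreover have "a \<bullet> h + \<epsilon> * (a \<bullet> e) \<noteq> 0" if "a \<in> unit_roots" for a
    using that e \<epsilon> by (cases "a \<bullet> h" rule: linorder_cases) fastforce+
  ultimately show ?thesis using \<epsilon>(2) by metis
qed

lemma closure_arr_face_fund_chamber:
  assumes c0: "\<forall>a\<in>unit_roots. a \<bullet> c0 \<noteq> 0" "\<forall>a\<in>unit_roots. a \<bullet> h < 0 \<longrightarrow> a \<bullet> c0 < 0"
  shows "closure (arr_face W h) \<subseteq> chamber.fund_chamber W c0"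
proof
  interpret chamber W c0 using c0(1) by unfold_locales
  fix y assume y: "y \<in> closure (arr_face W h)"
  have "a \<bullet> y \<ge> 0" if a: "a \<in> pos_roots" for a
    using closure_arr_face_sign[OF y unit_rootsD(1)[OF pos_rootsD(1)[OF a]]] c0(2) pos_rootsD[OF a]
    by (cases "a \<bullet> h" rule: linorder_cases) force+
  thus "y \<in> fund_chamber" unfolding fund_chamber_def dual_cone_def by blast
qed

lemma closure_arr_face_fixed:
  assumes w: "w \<in> W" and y: "y \<in> closure (arr_face W h)" "w y \<in> closure (arr_face W h)"
  shows "w y = y"
proof -
  obtain c0 where c0: "\<forall>a\<in>unit_roots. a \<bullet> c0 \<noteq> 0" "\<forall>a\<in>unit_roots. a \<bullet> h < 0 \<longrightarrow> a \<bullet> c0 < 0"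
    using exists_chamber_containing_face by blast
  interpret chamber W c0 using c0(1) by unfold_locales
  obtain l where "set l \<subseteq> {al \<in> simple_roots. al \<bullet> y = 0}" "w = refl_word l"
    using fund_chamber_stabilizer[OF w] y closure_arr_face_fund_chamber[OF c0] by blast
  thus ?thesis by (auto intro: refl_word_fixes)
qed

text \<open>Steinberg's theorem: the stabiliser of \<open>x\<close> is generated by the reflections fixing \<open>x\<close>.\<close>

lemma stabilizer_fixes:
  assumes w: "w \<in> W" and wx: "w x = x" and r: "\<forall>a\<in>unit_roots. a \<bullet> x = 0 \<longrightarrow> a \<bullet> r = 0"
  shows "w r = r"
proof -
  obtain c0 where c0: "\<forall>a\<in>unit_roots. a \<bullet> c0 \<noteq> 0" "\<forall>a\<in>unit_roots. a \<bullet> x < 0 \<longrightarrow> a \<bullet> c0 < 0"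
    using exists_chamber_containing_face by blast
  interpret chamber W c0 using c0(1) by unfold_locales
  have "x \<in> fund_chamber" using closure_arr_face_fund_chamber[OF c0] arr_face_self closure_subset by blast
  then obtain l where "set l \<subseteq> {al \<in> simple_roots. al \<bullet> x = 0}" "w = refl_word l"
    using fund_chamber_stabilizer[OF w] wx by metis
  thus ?thesis using r simple_rootsD(2) by (auto intro: refl_word_fixes)
qed

lemma image_arr_face_fixed:
  assumes w: "w \<in> W" and F: "F \<in> arr_faces W" and H: "H \<in> arr_faces W"
    and FH: "F \<subseteq> closure H" "w ` F \<subseteq> closure H"
  shows "w ` F = F"
proof -
  obtain f h where f: "F = arr_face W f" and h: "H = arr_face W h" using F H unfolding arr_faces_def by blast
  have "w f = f" using closure_arr_face_fixed[OF w] FH arr_face_self unfolding f h by blast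
  thus ?thesis using image_arr_face_W[OF w, of f] f by simp
qed

end

section \<open>The set \<open>\<Xi>\<close> and the projections \<open>\<pi>\<^sub>m\<^sub>,\<^sub>n\<close>\<close>

definition pair_le :: "'a::topological_space set \<times> 'a set \<Rightarrow> 'a set \<times> 'a set \<Rightarrow> bool" where
  "pair_le q p \<longleftrightarrow> face_le (fst q) (fst p) \<and> face_le (snd q) (snd p)"

definition pair_image :: "('a \<Rightarrow> 'a) \<Rightarrow> 'a set \<times> 'a set \<Rightarrow> 'a set \<times> 'a set" where
  "pair_image w p = (w ` fst p, w ` snd p)"

lemma face_le_refl: "face_le A A"
  unfolding face_le_def using closure_subset by blast

lemma face_le_trans: "face_le A B \<Longrightarrow> face_le B C \<Longrightarrow> face_le A C"
  unfolding face_le_def by (metis closure_closure closure_mono subset_trans)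

lemma pair_le_refl: "pair_le p p"
  unfolding pair_le_def using face_le_refl by blast

lemma pair_le_trans: "pair_le a b \<Longrightarrow> pair_le b c \<Longrightarrow> pair_le a c"
  unfolding pair_le_def using face_le_trans by blast

lemma pair_image_comp: "pair_image (v \<circ> w) p = pair_image v (pair_image w p)"
  unfolding pair_image_def by (simp add: image_comp)

lemma pair_image_id: "pair_image id p = p"
  unfolding pair_image_def by simp

context reflection_group
begin

lemma arr_faces_W: "F \<in> arr_faces W \<Longrightarrow> w \<in> W \<Longrightarrow> w ` F \<in> arr_faces W"
  unfolding arr_faces_def using image_arr_face_W by auto

lemma pair_orbit_iff: "q \<in> pair_orbit W p \<longleftrightarrow> (\<exists>w\<in>W. q = pair_image w p)"
  unfolding pair_orbit_def pair_image_def by auto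

lemma pair_orbit_self: "p \<in> pair_orbit W p"
  using pair_orbit_iff id_W pair_image_id by metis

lemma pair_orbit_in_Xi: "fst p \<in> arr_faces W \<Longrightarrow> snd p \<in> arr_faces W \<Longrightarrow> pair_orbit W p \<in> Xi W"
  unfolding Xi_def by (cases p) auto

lemma XiE:
  assumes "m \<in> Xi W" obtains C D where "C \<in> arr_faces W" "D \<in> arr_faces W" "m = pair_orbit W (C, D)"
  using assms unfolding Xi_def by auto

lemma Xi_faces: assumes "m \<in> Xi W" "p \<in> m" shows "fst p \<in> arr_faces W" "snd p \<in> arr_faces W"
proof -
  obtain C D where CD: "C \<in> arr_faces W" "D \<in> arr_faces W" "m = pair_orbit W (C, D)" using XiE assms(1) by blast
  then obtain w where "w \<in> W" "p = pair_image w (C, D)" using assms(2) pair_orbit_iff by blast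
  thus "fst p \<in> arr_faces W" "snd p \<in> arr_faces W" using arr_faces_W CD unfolding pair_image_def by auto
qed

lemma finite_Xi: "finite (Xi W)"
  unfolding Xi_def using finite_arr_faces by blast

lemma finite_Xi_elem: assumes "m \<in> Xi W" shows "finite m"
proof (rule finite_subset)
  show "m \<subseteq> arr_faces W \<times> arr_faces W" using Xi_faces[OF assms] by (auto simp: mem_Times_iff)
  show "finite (arr_faces W \<times> arr_faces W)" using finite_arr_faces by blast
qed

lemma pair_orbit_eq_Xi: assumes "m \<in> Xi W" "p \<in> m" shows "pair_orbit W p = m"
proof -
  obtain C D where m: "m = pair_orbit W (C, D)" using XiE assms(1) by blast
  then obtain v where v: "v \<in> W" "p = pair_image v (C, D)" using assms(2) pair_orbit_iff by blast
  show ?thesis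
  proof (intro set_eqI iffI)
    fix q assume "q \<in> pair_orbit W p"
    then obtain w where w: "w \<in> W" "q = pair_image w p" using pair_orbit_iff by blast
    hence "q = pair_image (w \<circ> v) (C, D)" using v(2) pair_image_comp by metis
    thus "q \<in> m" using m comp_W[OF w(1) v(1)] pair_orbit_iff by blast
  next
    fix q assume "q \<in> m"
    then obtain u where u: "u \<in> W" "q = pair_image u (C, D)" using m pair_orbit_iff by blast
    have "u \<circ> inv v \<circ> v = u" using v(1) by (simp add: fun_eq_iff)
    hence "q = pair_image (u \<circ> inv v) p" using u(2) v(2) pair_image_comp by metis
    thus "q \<in> pair_orbit W p" using comp_W[OF u(1) inv_W[OF v(1)]] pair_orbit_iff by blast
  qed
qed

lemma Xi_transitive: assumes "m \<in> Xi W" "p \<in> m" "p' \<in> m" shows "\<exists>w\<in>W. p' = pair_image w p"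
  using pair_orbit_eq_Xi assms pair_orbit_iff by blast

lemma Xi_pair_image: "m \<in> Xi W \<Longrightarrow> p \<in> m \<Longrightarrow> w \<in> W \<Longrightarrow> pair_image w p \<in> m"
  using pair_orbit_eq_Xi pair_orbit_iff by blast

lemma pair_le_pair_image: "w \<in> W \<Longrightarrow> pair_le q p \<Longrightarrow> pair_le (pair_image w q) (pair_image w p)"
  unfolding pair_le_def face_le_def pair_image_def by (simp add: image_closure_W[symmetric] image_mono)

text \<open>Uniqueness holds because \<open>W\<close> moves no face inside the closure of a face.\<close>

lemma pair_le_unique:
  assumes n: "n \<in> Xi W" and p: "fst p \<in> arr_faces W" "snd p \<in> arr_faces W"
    and q: "q \<in> n" "pair_le q p" "q' \<in> n" "pair_le q' p"
  shows "q = q'"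
proof -
  obtain w where w: "w \<in> W" "q' = pair_image w q" using Xi_transitive n q by blast
  have "w ` fst q = fst q" "w ` snd q = snd q"
    using image_arr_face_fixed[OF w(1) Xi_faces(1)[OF n q(1)] p(1)] image_arr_face_fixed[OF w(1) Xi_faces(2)[OF n q(1)] p(2)]
      q(2,4) w(2) unfolding pair_le_def face_le_def pair_image_def by auto
  thus ?thesis using w(2) unfolding pair_image_def by (cases q) auto
qed

lemma proj_eqI:
  assumes "n \<in> Xi W" "fst p \<in> arr_faces W" "snd p \<in> arr_faces W" "q \<in> n" "pair_le q p"
  shows "proj m n p = q"
  unfolding proj_def using assms pair_le_unique unfolding pair_le_def by (intro the_equality) blast+

text \<open>The product order on \<open>\<Xi>\<close>, of which \<open>\<ge>'\<close> and \<open>\<ge>''\<close> are the two special cases.\<close>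
definition xi_ge :: "'a xi \<Rightarrow> 'a xi \<Rightarrow> bool" where
  "xi_ge m n \<longleftrightarrow> m \<in> Xi W \<and> n \<in> Xi W \<and> (\<exists>p\<in>m. \<exists>q\<in>n. pair_le q p)"

lemma xi_ge1_imp_xi_ge: assumes "xi_ge1 W m n" shows "xi_ge m n"
proof -
  obtain C D C' where CD: "(C, D) \<in> m" "(C', D) \<in> n" "face_le C' C" using assms unfolding xi_ge1_def by blast
  hence "pair_le (C', D) (C, D)" unfolding pair_le_def using face_le_refl by simp
  thus ?thesis using assms CD unfolding xi_ge1_def xi_ge_def by blast
qed

lemma xi_ge2_imp_xi_ge: assumes "xi_ge2 W m n" shows "xi_ge m n"
proof -
  obtain C D D' where CD: "(C, D) \<in> m" "(C, D') \<in> n" "face_le D' D" using assms unfolding xi_ge2_def by blast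
  hence "pair_le (C, D') (C, D)" unfolding pair_le_def using face_le_refl by simp
  thus ?thesis using assms CD unfolding xi_ge2_def xi_ge_def by blast
qed

lemma proj_mem_le:
  assumes "xi_ge m n" "p \<in> m" shows "proj m n p \<in> n" "pair_le (proj m n p) p"
proof -
  obtain P Q where PQ: "P \<in> m" "Q \<in> n" "pair_le Q P" and mn: "m \<in> Xi W" "n \<in> Xi W"
    using assms(1) unfolding xi_ge_def by blast
  obtain w where w: "w \<in> W" "p = pair_image w P" using Xi_transitive mn(1) PQ(1) assms(2) by blast
  have q: "pair_image w Q \<in> n" "pair_le (pair_image w Q) p" using Xi_pair_image mn(2) PQ w pair_le_pair_image by auto
  thus "proj m n p \<in> n" "pair_le (proj m n p) p" using proj_eqI[OF mn(2) Xi_faces[OF mn(1) assms(2)] q] by auto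
qed

lemma proj_surj: assumes "xi_ge m n" "q \<in> n" shows "\<exists>p\<in>m. proj m n p = q"
proof -
  obtain P Q where PQ: "P \<in> m" "Q \<in> n" "pair_le Q P" and mn: "m \<in> Xi W" "n \<in> Xi W"
    using assms(1) unfolding xi_ge_def by blast
  obtain w where w: "w \<in> W" "q = pair_image w Q" using Xi_transitive mn(2) PQ(2) assms(2) by blast
  have p: "pair_image w P \<in> m" using Xi_pair_image mn(1) PQ(1) w(1) by blast
  have "pair_le q (pair_image w P)" using w pair_le_pair_image PQ(3) by blast
  thus ?thesis using proj_eqI[OF mn(2) Xi_faces[OF mn(1) p] assms(2)] p by blast
qed

lemma proj_proj:
  assumes "xi_ge m n" "xi_ge n q" "p \<in> m"
  shows "proj n q (proj m n p) = proj m q p"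
proof -
  have mq: "m \<in> Xi W" "q \<in> Xi W" using assms unfolding xi_ge_def by auto
  have "proj m n p \<in> n" "pair_le (proj m n p) p" using proj_mem_le assms(1,3) by auto
  moreover from this have "proj n q (proj m n p) \<in> q" "pair_le (proj n q (proj m n p)) (proj m n p)"
    using proj_mem_le assms(2) by auto
  ultimately show ?thesis using proj_eqI[OF mq(2) Xi_faces[OF mq(1) assms(3)]] pair_le_trans by metis
qed

lemma proj_snd_xi_ge1: assumes "xi_ge1 W m n" "p \<in> m" shows "snd (proj m n p) = snd p"
proof -
  obtain C D C' where h: "(C, D) \<in> m" "(C', D) \<in> n" "face_le C' C" and mn: "m \<in> Xi W" "n \<in> Xi W"
    using assms(1) unfolding xi_ge1_def by blast
  obtain w where w: "w \<in> W" "p = pair_image w (C, D)" using Xi_transitive mn(1) h(1) assms(2) by blast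
  have "pair_le (C', D) (C, D)" unfolding pair_le_def using h(3) face_le_refl by simp
  hence "pair_image w (C', D) \<in> n" "pair_le (pair_image w (C', D)) p"
    using Xi_pair_image mn(2) h(2) w pair_le_pair_image by auto
  hence "proj m n p = pair_image w (C', D)" using proj_eqI[OF mn(2) Xi_faces[OF mn(1) assms(2)]] by blast
  thus ?thesis using w(2) unfolding pair_image_def by simp
qed

lemma proj_fst_xi_ge2: assumes "xi_ge2 W m n" "p \<in> m" shows "fst (proj m n p) = fst p"
proof -
  obtain C D D' where h: "(C, D) \<in> m" "(C, D') \<in> n" "face_le D' D" and mn: "m \<in> Xi W" "n \<in> Xi W"
    using assms(1) unfolding xi_ge2_def by blast
  obtain w where w: "w \<in> W" "p = pair_image w (C, D)" using Xi_transitive mn(1) h(1) assms(2) by blast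
  have "pair_le (C, D') (C, D)" unfolding pair_le_def using h(3) face_le_refl by simp
  hence "pair_image w (C, D') \<in> n" "pair_le (pair_image w (C, D')) p"
    using Xi_pair_image mn(2) h(2) w pair_le_pair_image by auto
  hence "proj m n p = pair_image w (C, D')" using proj_eqI[OF mn(2) Xi_faces[OF mn(1) assms(2)]] by blast
  thus ?thesis using w(2) unfolding pair_image_def by simp
qed

subsection \<open>Anodyne projections\<close>

definition vanishing_roots :: "'a \<Rightarrow> 'a \<Rightarrow> 'a set" where
  "vanishing_roots c d = {a \<in> unit_roots. a \<bullet> c = 0 \<and> a \<bullet> d = 0}"

lemma finite_vanishing_roots: "finite (vanishing_roots c d)"
  unfolding vanishing_roots_def using finite_unit_roots by auto

lemma vanishing_roots_W: assumes u: "u \<in> W" shows "vanishing_roots (u c) (u d) = u ` vanishing_roots c d"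
proof
  show "u ` vanishing_roots c d \<subseteq> vanishing_roots (u c) (u d)"
    unfolding vanishing_roots_def using unit_roots_W[OF _ u] inner_W[OF u] by auto
  show "vanishing_roots (u c) (u d) \<subseteq> u ` vanishing_roots c d"
  proof
    fix a assume "a \<in> vanishing_roots (u c) (u d)"
    hence "inv u a \<in> vanishing_roots c d"
      unfolding vanishing_roots_def using unit_roots_W[OF _ inv_W[OF u]] inner_inv_W[OF u] by (auto simp: inner_commute)
    moreover have "a = u (inv u a)" using u by simp
    ultimately show "a \<in> u ` vanishing_roots c d" by blast
  qed
qed

lemma vanishing_roots_generic_part:
  "z \<in> generic_part W L \<Longrightarrow> vanishing_roots (snd z) (fst z) = {a \<in> unit_roots. \<forall>v\<in>L. a \<bullet> v = 0}"
  unfolding vanishing_roots_def generic_part_def using unit_rootsD(1) by auto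

lemma card_vanishing_roots_stratum:
  assumes "cell W m \<subseteq> stratum W L" "(C, D) \<in> m" "c \<in> C" "d \<in> D"
  shows "card (vanishing_roots c d) = card {a \<in> unit_roots. \<forall>v\<in>L. a \<bullet> v = 0}"
proof -
  have "pt_orbit W (d, c) \<in> stratum W L" using assms unfolding cell_def by blast
  then obtain z where z: "z \<in> generic_part W L" "pt_orbit W z = pt_orbit W (d, c)"
    unfolding stratum_def by auto
  have "(d, c) \<in> pt_orbit W (d, c)" unfolding pt_orbit_def using id_W by (intro CollectI exI[of _ id]) simp
  hence "(d, c) \<in> pt_orbit W z" using z(2) by simp
  then obtain u where u: "u \<in> W" "d = u (fst z)" "c = u (snd z)" unfolding pt_orbit_def by auto
  have "card (vanishing_roots c d) = card (vanishing_roots (snd z) (fst z))"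
    using vanishing_roots_W[OF u(1)] u(2,3) card_image[OF inj_on_subset[OF bij_is_inj[OF bij_W[OF u(1)]]]]
    by simp
  thus ?thesis using vanishing_roots_generic_part[OF z(1)] by simp
qed

lemma vanishing_roots_closure_mono:
  assumes "c' \<in> closure (arr_face W c)" "d' \<in> closure (arr_face W d)"
  shows "vanishing_roots c d \<subseteq> vanishing_roots c' d'"
  unfolding vanishing_roots_def using closure_arr_face_sign(2)[OF assms(1)] closure_arr_face_sign(2)[OF assms(2)]
    unit_rootsD(1) by blast

text \<open>Steinberg applied to a generic point \<open>c' + t d'\<close> of the span of \<open>c'\<close> and \<open>d'\<close>.\<close>
lemma stabilizer_fixes_pair:
  assumes w: "w \<in> W" "w c' = c'" "w d' = d'" and sub: "vanishing_roots c' d' \<subseteq> vanishing_roots c d"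
  shows "w c = c" "w d = d"
proof -
  obtain t where t: "\<forall>a\<in>unit_roots. a \<bullet> (c' + t *\<^sub>R d') = 0 \<longrightarrow> a \<bullet> c' = 0 \<and> a \<bullet> d' = 0"
    using exists_generic_combination[OF finite_unit_roots] by blast
  have "w (c' + t *\<^sub>R d') = c' + t *\<^sub>R d'" using w linear_W[OF w(1)] by (simp add: linear_add linear_scale)
  moreover have "\<forall>a\<in>unit_roots. a \<bullet> (c' + t *\<^sub>R d') = 0 \<longrightarrow> a \<bullet> c = 0 \<and> a \<bullet> d = 0"
    using t sub unfolding vanishing_roots_def by blast
  ultimately show "w c = c" "w d = d" using stabilizer_fixes[OF w(1)] by blast+
qed

lemma Xi_elem_arr_face: "m \<in> Xi W \<Longrightarrow> p \<in> m \<Longrightarrow> \<exists>c d. p = (arr_face W c, arr_face W d)"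
  using Xi_faces unfolding arr_faces_def by (metis imageE prod.collapse)

lemma anodyne_proj_inj:
  assumes mn: "xi_ge m n" and ss: "same_stratum W m n"
  shows "inj_on (proj m n) m"
proof (rule inj_onI)
  fix p p' assume p: "p \<in> m" and p': "p' \<in> m" and eq: "proj m n p = proj m n p'"
  have X: "m \<in> Xi W" "n \<in> Xi W" using mn unfolding xi_ge_def by auto
  define q where "q = proj m n p"
  have q: "q \<in> n" "pair_le q p" "pair_le q p'" using proj_mem_le[OF mn p] proj_mem_le[OF mn p'] eq unfolding q_def by auto
  obtain w where w: "w \<in> W" "p' = pair_image w p" using Xi_transitive X(1) p p' by blast
  txt \<open>\<open>w\<close> fixes \<open>q\<close>, because \<open>q\<close> and \<open>w q\<close> both lie in \<open>n\<close> below \<open>p'\<close>.\<close>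
  have "pair_image w q = q"
    using pair_le_unique[OF X(2) Xi_faces[OF X(1) p'] Xi_pair_image[OF X(2) q(1) w(1)] _ q(1,3)]
      pair_le_pair_image[OF w(1) q(2)] w(2) by simp
  moreover obtain c' d' where q_eq: "q = (arr_face W c', arr_face W d')" using Xi_elem_arr_face X(2) q(1) by blast
  ultimately have "w ` arr_face W c' = arr_face W c'" "w ` arr_face W d' = arr_face W d'"
    unfolding pair_image_def by auto
  hence wc': "w c' = c'" and wd': "w d' = d'"
    using closure_arr_face_fixed[OF w(1)] arr_face_self closure_subset by blast+
  obtain c d where p_eq: "p = (arr_face W c, arr_face W d)" using Xi_elem_arr_face X(1) p by blast
  have sub: "vanishing_roots c d \<subseteq> vanishing_roots c' d'"
    using q(2) arr_face_self unfolding q_eq p_eq pair_le_def face_le_def by (intro vanishing_roots_closure_mono) auto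
  obtain L where L: "cell W m \<subseteq> stratum W L" "cell W n \<subseteq> stratum W L" using ss unfolding same_stratum_def by blast
  have "card (vanishing_roots c d) = card (vanishing_roots c' d')"
    using card_vanishing_roots_stratum[OF L(1), of "arr_face W c" "arr_face W d"]
      card_vanishing_roots_stratum[OF L(2), of "arr_face W c'" "arr_face W d'"] p q(1) arr_face_self
    unfolding p_eq q_eq by simp
  hence "vanishing_roots c' d' \<subseteq> vanishing_roots c d" using card_subset_eq[OF finite_vanishing_roots sub] by simp
  hence "w c = c" "w d = d" using stabilizer_fixes_pair[OF w(1) wc' wd'] by blast+
  thus "p = p'" using w(2) image_arr_face_W[OF w(1)] unfolding p_eq pair_image_def by simp
qed

end

section \<open>The sheaf of functions\<close>

lemma Fun_space_closed:
  "(\<lambda>_. 0) \<in> Fun_space m"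
  "f \<in> Fun_space m \<Longrightarrow> g \<in> Fun_space m \<Longrightarrow> (\<lambda>x. f x + g x) \<in> Fun_space m"
  "f \<in> Fun_space m \<Longrightarrow> (\<lambda>x. c * f x) \<in> Fun_space m"
  for f g :: "_ \<Rightarrow> 'k::{monoid_add, mult_zero}"
  unfolding Fun_space_def by simp_all

lemma Fun_space_outside: "f \<in> Fun_space m \<Longrightarrow> p \<notin> m \<Longrightarrow> f p = 0"
  unfolding Fun_space_def by blast

lemma push_Fun_space: "push m n f \<in> Fun_space n"
  unfolding push_def Fun_space_def by simp

lemma pull_Fun_space: "pull m n f \<in> Fun_space m"
  unfolding pull_def Fun_space_def by simp

lemma push_add: "push m n (\<lambda>x. f x + g x) = (\<lambda>x. push m n f x + push m n g x)"
  unfolding push_def by (simp add: sum.distrib fun_eq_iff)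

lemma push_mult: "push m n (\<lambda>x. c * f x) = (\<lambda>x. c * push m n f x)" for c :: "'k::semiring_0"
  unfolding push_def by (simp add: sum_distrib_left fun_eq_iff)

lemma pull_add: "pull m n (\<lambda>x. f x + g x) = (\<lambda>x. pull m n f x + pull m n g x)"
  for f g :: "_ \<Rightarrow> 'k::monoid_add"
  unfolding pull_def by (simp add: fun_eq_iff)

lemma pull_mult: "pull m n (\<lambda>x. c * f x) = (\<lambda>x. c * pull m n f x)" for c :: "'k::mult_zero"
  unfolding pull_def by (simp add: fun_eq_iff)

lemma push_id: assumes "\<forall>p\<in>m. proj m m p = p" "f \<in> Fun_space m" shows "push m m f = f"
proof
  fix q
  have "{p \<in> m. proj m m p = q} = {q}" if "q \<in> m" using that assms(1) by auto
  thus "push m m f q = f q" unfolding push_def using Fun_space_outside[OF assms(2)] by simp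
qed

lemma pull_id: assumes "\<forall>p\<in>m. proj m m p = p" "f \<in> Fun_space m" shows "pull m m f = f"
  unfolding pull_def using assms Fun_space_outside[OF assms(2)] by (simp add: fun_eq_iff)

lemma push_push:
  assumes "finite m" "finite n" and proj_mn: "\<forall>p\<in>m. proj m n p \<in> n"
    and proj_nq: "\<forall>p\<in>m. proj n q (proj m n p) = proj m q p"
  shows "push n q (push m n f) = push m q f"
proof
  fix x show "push n q (push m n f) x = push m q f x"
  proof (cases "x \<in> q")
    case True
    let ?S = "{p \<in> m. proj m q p = x}" and ?T = "{r \<in> n. proj n q r = x}"
    have "proj m n ` ?S \<subseteq> ?T" using proj_mn proj_nq by auto
    moreover have "{p \<in> ?S. proj m n p = r} = {p \<in> m. proj m n p = r}" if "r \<in> ?T" for r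
      using that proj_nq by auto
    ultimately have "(\<Sum>r\<in>?T. push m n f r) = (\<Sum>p\<in>?S. f p)"
      using sum.group[of ?S ?T "proj m n" f] assms(1,2) by (simp add: push_def)
    thus ?thesis unfolding push_def[of n q] push_def[of m q] using True by simp
  qed (simp add: push_def)
qed

lemma pull_pull:
  assumes "\<forall>p\<in>m. proj m n p \<in> n" "\<forall>p\<in>m. proj n q (proj m n p) = proj m q p"
  shows "pull m n (pull n q f) = pull m q f"
  unfolding pull_def using assms by (simp add: fun_eq_iff)

lemma push_bij_proj:
  assumes bij: "bij_betw (proj m n) m n" and q: "q \<in> n"
  shows "push m n f q = f (the_inv_into m (proj m n) q)"
proof -
  have "{p \<in> m. proj m n p = q} = {the_inv_into m (proj m n) q}"
    using bij q by (auto simp: bij_betw_def the_inv_into_f_f f_the_inv_into_f the_inv_into_into)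
  thus ?thesis unfolding push_def using q by simp
qed

lemma push_pull_inverse:
  assumes bij: "bij_betw (proj m n) m n"
  shows "g \<in> Fun_space n \<Longrightarrow> push m n (pull m n g) = g" "f \<in> Fun_space m \<Longrightarrow> pull m n (push m n f) = f"
proof -
  have inv: "the_inv_into m (proj m n) q \<in> m" "proj m n (the_inv_into m (proj m n) q) = q" if "q \<in> n" for q
    using that bij by (auto simp: bij_betw_def the_inv_into_into f_the_inv_into_f)
  have proj: "proj m n p \<in> n" "the_inv_into m (proj m n) (proj m n p) = p" if "p \<in> m" for p
    using that bij by (auto simp: bij_betw_def the_inv_into_f_f)
  show "push m n (pull m n g) = g" if g: "g \<in> Fun_space n"
  proof
    fix q show "push m n (pull m n g) q = g q"
    proof (cases "q \<in> n")
      case True thus ?thesis using inv[OF True] by (simp add: push_bij_proj[OF bij] pull_def)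
    qed (simp add: push_def Fun_space_outside[OF g])
  qed
  show "f \<in> Fun_space m \<Longrightarrow> pull m n (push m n f) = f"
    using proj Fun_space_outside by (auto simp: fun_eq_iff push_bij_proj[OF bij] pull_def)
qed

lemma push_bij: "bij_betw (proj m n) m n \<Longrightarrow> bij_betw (push m n) (Fun_space m) (Fun_space n)"
  by (rule bij_betwI[where g = "pull m n"]) (auto simp: push_Fun_space pull_Fun_space push_pull_inverse)

lemma pull_bij:
  "bij_betw (proj m n) m n \<Longrightarrow> bij_betw (pull m n :: (_ \<Rightarrow> 'k::comm_monoid_add) \<Rightarrow> _) (Fun_space n) (Fun_space m)"
  by (rule bij_betwI[where g = "push m n"]) (auto simp: push_Fun_space pull_Fun_space push_pull_inverse)

context reflection_group
begin

lemma proj_self: "m \<in> Xi W \<Longrightarrow> p \<in> m \<Longrightarrow> proj m m p = p"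
  using proj_eqI Xi_faces pair_le_refl by blast

lemma anodyne_proj_bij: assumes "xi_ge m n" "same_stratum W m n" shows "bij_betw (proj m n) m n"
proof -
  have "proj m n ` m = n" using proj_mem_le(1)[OF assms(1)] proj_surj[OF assms(1)] by blast
  thus ?thesis unfolding bij_betw_def using anodyne_proj_inj[OF assms] by blast
qed

lemma push_push_xi_ge: "xi_ge m n \<Longrightarrow> xi_ge n q \<Longrightarrow> push n q (push m n f) = push m q f"
  by (intro push_push) (auto simp: xi_ge_def finite_Xi_elem proj_mem_le(1) proj_proj)

lemma pull_pull_xi_ge: "xi_ge m n \<Longrightarrow> xi_ge n q \<Longrightarrow> pull m n (pull n q f) = pull m q f"
  by (intro pull_pull) (auto simp: proj_mem_le(1) proj_proj)

lemma Sup_fibre_proj: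
  assumes g1: "xi_ge1 W m' n'" and g2: "xi_ge2 W n n'" and m: "m \<in> Sup_xi W m' n" and r: "r \<in> m" "proj m n r = x"
  shows "proj m m' r \<in> m'" "proj m' n' (proj m m' r) = proj n n' x"
    "(fst (proj m m' r), snd x) = r" "pair_orbit W r = m"
proof -
  have m_ge: "xi_ge2 W m m'" "xi_ge1 W m n" "m \<in> Xi W" using m unfolding Sup_xi_def xi_ge2_def by auto
  have n'_ge: "xi_ge m' n'" "n' \<in> Xi W" using xi_ge1_imp_xi_ge[OF g1] unfolding xi_ge_def by auto
  have p1: "proj m m' r \<in> m'" "pair_le (proj m m' r) r" using proj_mem_le[OF xi_ge2_imp_xi_ge[OF m_ge(1)] r(1)] by auto
  show "proj m m' r \<in> m'" by (fact p1(1))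
  have p2: "proj m' n' (proj m m' r) \<in> n'" "pair_le (proj m' n' (proj m m' r)) (proj m m' r)"
    using proj_mem_le[OF n'_ge(1) p1(1)] by auto
  have "x \<in> n" "pair_le x r" using proj_mem_le[OF xi_ge1_imp_xi_ge[OF m_ge(2)] r(1)] r(2) by auto
  hence x': "proj n n' x \<in> n'" "pair_le (proj n n' x) r"
    using proj_mem_le[OF xi_ge2_imp_xi_ge[OF g2]] pair_le_trans by blast+
  show "proj m' n' (proj m m' r) = proj n n' x"
    using pair_le_unique[OF n'_ge(2) Xi_faces[OF m_ge(3) r(1)] p2(1) pair_le_trans[OF p2(2) p1(2)] x'] .
  show "(fst (proj m m' r), snd x) = r"
    using proj_fst_xi_ge2[OF m_ge(1) r(1)] proj_snd_xi_ge1[OF m_ge(2) r(1)] r(2) by simp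
  show "pair_orbit W r = m" using pair_orbit_eq_Xi[OF m_ge(3) r(1)] .
qed

lemma fibre_Sup_fibre:
  assumes g1: "xi_ge1 W m' n'" and g2: "xi_ge2 W n n'" and x: "x \<in> n"
    and p: "p \<in> m'" "proj m' n' p = proj n n' x"
  shows "pair_orbit W (fst p, snd x) \<in> Sup_xi W m' n"
    "proj (pair_orbit W (fst p, snd x)) n (fst p, snd x) = x"
    "proj (pair_orbit W (fst p, snd x)) m' (fst p, snd x) = p"
proof -
  define r where "r = (fst p, snd x)"
  define m where "m = pair_orbit W r"
  have X: "m' \<in> Xi W" "n' \<in> Xi W" "n \<in> Xi W" using g1 g2 unfolding xi_ge1_def xi_ge2_def by auto
  have x': "proj n n' x \<in> n'" "pair_le (proj n n' x) x" "fst (proj n n' x) = fst x"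
    using proj_mem_le[OF xi_ge2_imp_xi_ge[OF g2] x] proj_fst_xi_ge2[OF g2 x] by auto
  have "pair_le (proj n n' x) p" "snd p = snd (proj n n' x)"
    using proj_mem_le(2)[OF xi_ge1_imp_xi_ge[OF g1] p(1)] proj_snd_xi_ge1[OF g1 p(1)] p(2) by auto
  hence le: "face_le (fst x) (fst p)" "face_le (snd p) (snd x)" using x'(2,3) unfolding pair_le_def by auto
  have r_faces: "fst r \<in> arr_faces W" "snd r \<in> arr_faces W" unfolding r_def using Xi_faces X p(1) x by auto
  have m: "m \<in> Xi W" "r \<in> m" unfolding m_def using pair_orbit_in_Xi[OF r_faces] pair_orbit_self by auto
  have "xi_ge2 W m m'" unfolding xi_ge2_def using m X(1) p(1) le(2) unfolding r_def by (metis prod.collapse)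
  moreover have "xi_ge1 W m n" unfolding xi_ge1_def using m X(3) x le(1) unfolding r_def by (metis prod.collapse)
  ultimately show "pair_orbit W (fst p, snd x) \<in> Sup_xi W m' n" unfolding Sup_xi_def m_def r_def by simp
  show "proj (pair_orbit W (fst p, snd x)) n (fst p, snd x) = x"
    using proj_eqI[OF X(3) r_faces x] le(1) unfolding r_def by (simp add: pair_le_def face_le_refl)
  show "proj (pair_orbit W (fst p, snd x)) m' (fst p, snd x) = p"
    using proj_eqI[OF X(1) r_faces p(1)] le(2) unfolding r_def by (simp add: pair_le_def face_le_refl)
qed

lemma Sup_fibre_bij:
  assumes "xi_ge1 W m' n'" "xi_ge2 W n n'" "x \<in> n"
  shows "bij_betw (\<lambda>(m, r). proj m m' r) (SIGMA m:Sup_xi W m' n. {r \<in> m. proj m n r = x})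
    {p \<in> m'. proj m' n' p = proj n n' x}"
proof (rule bij_betwI[where g = "\<lambda>p. (pair_orbit W (fst p, snd x), (fst p, snd x))"])
  show "(\<lambda>(m, r). proj m m' r) \<in> (SIGMA m:Sup_xi W m' n. {r \<in> m. proj m n r = x}) \<rightarrow> {p \<in> m'. proj m' n' p = proj n n' x}"
  proof
    fix a assume "a \<in> (SIGMA m:Sup_xi W m' n. {r \<in> m. proj m n r = x})"
    then obtain m r where "a = (m, r)" "m \<in> Sup_xi W m' n" "r \<in> m" "proj m n r = x" by auto
    thus "(\<lambda>(m, r). proj m m' r) a \<in> {p \<in> m'. proj m' n' p = proj n n' x}"
      using Sup_fibre_proj(1,2)[OF assms(1,2)] by simp
  qed
  show "(\<lambda>p. (pair_orbit W (fst p, snd x), (fst p, snd x)))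
      \<in> {p \<in> m'. proj m' n' p = proj n n' x} \<rightarrow> (SIGMA m:Sup_xi W m' n. {r \<in> m. proj m n r = x})"
    using fibre_Sup_fibre(1,2)[OF assms] pair_orbit_self by auto
  show "(pair_orbit W (fst ((\<lambda>(m, r). proj m m' r) a), snd x), (fst ((\<lambda>(m, r). proj m m' r) a), snd x)) = a"
    if a: "a \<in> (SIGMA m:Sup_xi W m' n. {r \<in> m. proj m n r = x})" for a
  proof -
    obtain m r where "a = (m, r)" "m \<in> Sup_xi W m' n" "r \<in> m" "proj m n r = x" using a by auto
    thus ?thesis using Sup_fibre_proj(3,4)[OF assms(1,2)] by simp
  qed
  show "(\<lambda>(m, r). proj m m' r) (pair_orbit W (fst p, snd x), (fst p, snd x)) = p"
    if "p \<in> {p \<in> m'. proj m' n' p = proj n n' x}" for p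
    using that fibre_Sup_fibre(3)[OF assms] by auto
qed

lemma pull_push_Sup:
  assumes g1: "xi_ge1 W m' n'" and g2: "xi_ge2 W n n'"
  shows "pull n n' (push m' n' f) = (\<lambda>x. \<Sum>m\<in>Sup_xi W m' n. push m n (pull m m' f) x)"
proof
  fix x
  show "pull n n' (push m' n' f) x = (\<Sum>m\<in>Sup_xi W m' n. push m n (pull m m' f) x)"
  proof (cases "x \<in> n")
    case True
    have "finite (Sup_xi W m' n)" using finite_Xi by (rule finite_subset[rotated]) (auto simp: Sup_xi_def xi_ge1_def)
    moreover have "finite {r \<in> m. proj m n r = x}" if "m \<in> Sup_xi W m' n" for m
      using that finite_Xi_elem unfolding Sup_xi_def xi_ge1_def by auto
    ultimately have "(\<Sum>m\<in>Sup_xi W m' n. push m n (pull m m' f) x)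
        = (\<Sum>(m, r)\<in>(SIGMA m:Sup_xi W m' n. {r \<in> m. proj m n r = x}). f (proj m m' r))"
      using True by (simp add: sum.Sigma push_def pull_def)
    also have "\<dots> = (\<Sum>p\<in>{p \<in> m'. proj m' n' p = proj n n' x}. f p)"
      using sum.reindex_bij_betw[OF Sup_fibre_bij[OF g1 g2 True], of f] by (simp add: case_prod_unfold)
    also have "\<dots> = pull n n' (push m' n' f) x"
      using True proj_mem_le(1)[OF xi_ge2_imp_xi_ge[OF g2] True] by (simp add: push_def pull_def)
    finally show ?thesis by simp
  qed (simp add: push_def pull_def)
qed

end

theorem proposition7p6:
  fixes W :: "('a::euclidean_space \<Rightarrow> 'a) set"
  assumes "finite_reflection_group W"
    and "crystallographic W"
    and "\<forall>p :: 'k::field_char_0 poly. degree p > 0 \<longrightarrow> (\<exists>x. poly p x = 0)"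
  shows "mixed_Bruhat_sheaf W (Fun_space :: 'a xi \<Rightarrow> ('a set \<times> 'a set \<Rightarrow> 'k) set) push pull"
proof -
  interpret reflection_group W by unfold_locales (fact assms(1))
  show ?thesis
    unfolding mixed_Bruhat_sheaf_def
  proof (intro conjI)
  qed (auto simp: Fun_space_closed push_Fun_space pull_Fun_space push_add push_mult pull_add pull_mult
        push_id pull_id proj_self push_push_xi_ge pull_pull_xi_ge pull_push_Sup push_bij pull_bij
        anodyne_proj_bij xi_ge1_imp_xi_ge xi_ge2_imp_xi_ge)
qed

end
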